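(* Consider the noiseless model with $N_0(n)\ge1$, and assume either (F2) or (F'). Let $\ell<0$, and start the process from $X_n(0)=N_0(n)$, $L_n(0)=\ell$. Then $$p_{N_0(n)}(n,\ell)=\exp\Big(-\frac{\ell^2}{2\mu_{N_0(n)-1}(n)}\Big).$$ For $0<k<N_0(n)$, $$p_k(n,\ell)=\Big(\prod_{j=k}^{N_0(n)-1}\frac1{\mu_j(n)}\Big)\sum_{j=k-1}^{N_0(n)-1}\Big(\exp\Big(-\frac{\ell^2}{2\mu_j(n)}\Big)\prod_{\substack{i=k-1\\ i\ne j}}^{N_0(n)-1}\frac1{1/\mu_i(n)-1/\mu_j(n)}\Big).$$ Finally, $p_0(n,\ell)=1-\sum_{k=1}^{N_0(n)}p_k(n,\ell)$.
   Context: **Discrete processes with memory.** Fix $n\ge2$ and let $\mathcal D_n=\{0,1,\dots,n\}$. Fix reals $v_j(n)$, $j\in\mathcal D_n$, and functions $a_{ij}:\mathbb R\to[0,\infty)$. The process $(X_n(t),L_n(t))_{t\ge0}$ with values in $\mathcal D_n\times\mathbb R$ is built from its initial value and an independent family $(E^j_k)_{j\in\mathcal D_n,k\ge0}$ of i.i.d. mean-one exponential random variables, as follows. - Set $T_0=0$. - If $X_n(T_k)=x$ and $L_n(T_k)=y$, let $T^j_{k+1}=\inf\{t>T_k:\int_{T_k}^ta_{xj}(y+v_x(n)(s-T_k))\,ds\ge E^j_k\}$ (with $\inf\emptyset=\infty$) and $T_{k+1}=\min_jT^j_{k+1}$. - On $[T_k,T_{k+1})$ put $X_n(s)=x$; on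 $[T_k,T_{k+1}]$ put $L_n(s)=y+v_x(n)(s-T_k)$. - $X_n(T_{k+1})$ is the index $j$ attaining the minimum. Thus $L_n(t)=L_n(0)+\sum_jv_j(n)\,\mathrm{Leb}\{s\le t:X_n(s)=j\}$. **Noiseless model.** There are integers $N_0(n),N_1(n)$ with $0\le N_0(n),N_1(n)<n/2$ and $N_k(n)/n\to0$. - Boundary layers: $\partial\mathcal D_n^-=\{0,\dots,N_0(n)\}$ and $\partial\mathcal D_n^+=\{n-N_1(n),\dots,n\}$. - Memory rates: $v_j(n)>0$ for $j\in\partial\mathcal D_n^-$, $v_j(n)<0$ for $j\in\partial\mathcal D_n^+$, and $v_j(n)=0$ otherwise. Moreover $\sum_{j=0}^{N_0(n)}v_j(n)=\sum_{j=0}^{N_1(n)}|v_{n-j}(n)|=n$. - Jump rates: $a_{ij}\equiv0$ if $|i-j|\ne1$. For $0\le i\le n-1$, $a_{i,i+1}(\ell)=c_i(n)\max(\ell,0)$ and $a_{i+1,i}(\ell)=c_i(n)\max(-\ell,0)$, where - $c_i(n)=\sum_{m=0}^iv_m(n)$ for $0\le i\le N_0(n)$, - $c_i(n)=n$ for $N_0(n)\le i\le n-N_1(n)-1$, - $c_{n-1-i}(n)=\sum_{m=0}^i|v_{n-m}(n)|$ for $0\le i\le N_1(n)$. - Ratios: $\lambda_i(n)=v_i(n)/c_i(n)$ for $0\le i\le N_0(n)$, and $\mu_i(n)=v_{i+1}(n)/c_i(n)$ for $0\le i\le N_0(n)-1$. - Conditions: - (F2): the $\mu_i(n)$, $0\le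 i\le N_0(n)-1$, are pairwise distinct; - (F'): $v_j(n)\ge v_{j+1}(n)>0$ for $0\le j\le N_0(n)-1$. **Reversal quantities.** Start from $X_n(0)=N_0(n)$, $L_n(0)=\ell<0$. Let $\mathcal T_n=\inf\{t\ge0:L_n(t)\ge0\}$ and $G_n=X_n(\mathcal T_n)$ (the level at which the memory changes sign). Set $p_j(n,\ell)=P(G_n=j\mid X_n(0)=N_0(n),L_n(0)=\ell)$. *)

theory Defs
  imports "HOL-Probability.Probability"
begin

text \<open>State space D_n = {0..n}. Parameters: v (memory rates v_j(n)), a (jump rate functions a_ij),
  initial position x0, initial memory y0, and a sample e j k of the clocks E^j_k.\<close>

text \<open>Candidate holding time for a jump to j when the last jump (the k-th) left the process at
  level x with memory y: the time elapsed after T_k until the integrated rate reaches e.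
  inf of the empty set is +infinity (extended reals).  Written relative to T_k, i.e.
  T^j_{k+1} - T_k.\<close>
definition clock_time :: "(nat \<Rightarrow> real) \<Rightarrow> (nat \<Rightarrow> nat \<Rightarrow> real \<Rightarrow> real) \<Rightarrow> nat \<Rightarrow> real \<Rightarrow> nat \<Rightarrow> real \<Rightarrow> ereal" where
  "clock_time v a x y j e =
     Inf {ereal u | u. 0 < u \<and> e \<le> integral {0..u} (\<lambda>s. a x j (y + v x * s))}"

definition hold_time :: "nat \<Rightarrow> (nat \<Rightarrow> real) \<Rightarrow> (nat \<Rightarrow> nat \<Rightarrow> real \<Rightarrow> real) \<Rightarrow> nat \<Rightarrow> real \<Rightarrow> (nat \<Rightarrow> real) \<Rightarrow> ereal" where
  "hold_time n v a x y e = Min ((\<lambda>j. clock_time v a x y j (e j)) ` {..n})"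

text \<open>Index attaining the minimum (ties, a null event, broken by taking the least index).\<close>
definition next_level :: "nat \<Rightarrow> (nat \<Rightarrow> real) \<Rightarrow> (nat \<Rightarrow> nat \<Rightarrow> real \<Rightarrow> real) \<Rightarrow> nat \<Rightarrow> real \<Rightarrow> (nat \<Rightarrow> real) \<Rightarrow> nat" where
  "next_level n v a x y e =
     (LEAST j. j \<le> n \<and> clock_time v a x y j (e j) = hold_time n v a x y e)"

text \<open>Embedded jump chain: (T_k, X_n(T_k), L_n(T_k)).  Once T_k = infinity no further jump occurs.\<close>
fun jump_chain :: "nat \<Rightarrow> (nat \<Rightarrow> real) \<Rightarrow> (nat \<Rightarrow> nat \<Rightarrow> real \<Rightarrow> real) \<Rightarrow> nat \<Rightarrow> real \<Rightarrow>
    (nat \<Rightarrow> nat \<Rightarrow> real) \<Rightarrow> nat \<Rightarrow> ereal \<times> nat \<times> real" where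
  "jump_chain n v a x0 y0 e 0 = (0, x0, y0)"
| "jump_chain n v a x0 y0 e (Suc k) =
     (case jump_chain n v a x0 y0 e k of (T, x, y) \<Rightarrow>
        (let h = hold_time n v a x y (\<lambda>j. e j k) in
         if T = \<infinity> \<or> h = \<infinity> then (\<infinity>, x, y)
         else (T + h, next_level n v a x y (\<lambda>j. e j k), y + v x * real_of_ereal h)))"

definition interval_index :: "nat \<Rightarrow> (nat \<Rightarrow> real) \<Rightarrow> (nat \<Rightarrow> nat \<Rightarrow> real \<Rightarrow> real) \<Rightarrow> nat \<Rightarrow> real \<Rightarrow>
    (nat \<Rightarrow> nat \<Rightarrow> real) \<Rightarrow> real \<Rightarrow> nat" where
  "interval_index n v a x0 y0 e t = (LEAST k. ereal t < fst (jump_chain n v a x0 y0 e (Suc k)))"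

definition proc_X :: "nat \<Rightarrow> (nat \<Rightarrow> real) \<Rightarrow> (nat \<Rightarrow> nat \<Rightarrow> real \<Rightarrow> real) \<Rightarrow> nat \<Rightarrow> real \<Rightarrow>
    (nat \<Rightarrow> nat \<Rightarrow> real) \<Rightarrow> real \<Rightarrow> nat" where
  "proc_X n v a x0 y0 e t =
     fst (snd (jump_chain n v a x0 y0 e (interval_index n v a x0 y0 e t)))"

definition proc_L :: "nat \<Rightarrow> (nat \<Rightarrow> real) \<Rightarrow> (nat \<Rightarrow> nat \<Rightarrow> real \<Rightarrow> real) \<Rightarrow> nat \<Rightarrow> real \<Rightarrow>
    (nat \<Rightarrow> nat \<Rightarrow> real) \<Rightarrow> real \<Rightarrow> real" where
  "proc_L n v a x0 y0 e t =
     (case jump_chain n v a x0 y0 e (interval_index n v a x0 y0 e t) of (T, x, y) \<Rightarrow>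
        y + v x * (t - real_of_ereal T))"

text \<open>The reversal event {calT_n < infinity and G_n = j}, where calT_n = inf {t >= 0. L_n(t) >= 0}
  and G_n = X_n(calT_n).\<close>
definition reversal_at :: "nat \<Rightarrow> (nat \<Rightarrow> real) \<Rightarrow> (nat \<Rightarrow> nat \<Rightarrow> real \<Rightarrow> real) \<Rightarrow> nat \<Rightarrow> real \<Rightarrow>
    (nat \<Rightarrow> nat \<Rightarrow> real) \<Rightarrow> nat \<Rightarrow> bool" where
  "reversal_at n v a x0 y0 e j \<longleftrightarrow>
     (\<exists>t\<ge>0. 0 \<le> proc_L n v a x0 y0 e t) \<and>
     proc_X n v a x0 y0 e (Inf {t. 0 \<le> t \<and> 0 \<le> proc_L n v a x0 y0 e t}) = j"

definition noiseless_memory :: "nat \<Rightarrow> nat \<Rightarrow> nat \<Rightarrow> (nat \<Rightarrow> real) \<Rightarrow> bool" where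
  "noiseless_memory n N0 N1 v \<longleftrightarrow>
     2 \<le> n \<and> 2 * N0 < n \<and> 2 * N1 < n \<and>
     (\<forall>j\<le>N0. 0 < v j) \<and> (\<forall>j. n - N1 \<le> j \<and> j \<le> n \<longrightarrow> v j < 0) \<and>
     (\<forall>j. N0 < j \<and> j < n - N1 \<longrightarrow> v j = 0) \<and>
     (\<Sum>j=0..N0. v j) = real n \<and> (\<Sum>j=0..N1. \<bar>v (n - j)\<bar>) = real n"

definition cc :: "nat \<Rightarrow> nat \<Rightarrow> nat \<Rightarrow> (nat \<Rightarrow> real) \<Rightarrow> nat \<Rightarrow> real" where
  "cc n N0 N1 v i =
     (if i \<le> N0 then (\<Sum>m=0..i. v m)
      else if i \<le> n - N1 - 1 then real n
      else (\<Sum>m=0..n - 1 - i. \<bar>v (n - m)\<bar>))"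

definition noiseless_rate :: "nat \<Rightarrow> nat \<Rightarrow> nat \<Rightarrow> (nat \<Rightarrow> real) \<Rightarrow> nat \<Rightarrow> nat \<Rightarrow> real \<Rightarrow> real" where
  "noiseless_rate n N0 N1 v i j l =
     (if j = i + 1 \<and> i \<le> n - 1 then cc n N0 N1 v i * max l 0
      else if i = j + 1 \<and> j \<le> n - 1 then cc n N0 N1 v j * max (- l) 0
      else 0)"

definition mu :: "nat \<Rightarrow> nat \<Rightarrow> nat \<Rightarrow> (nat \<Rightarrow> real) \<Rightarrow> nat \<Rightarrow> real" where
  "mu n N0 N1 v i = v (i + 1) / cc n N0 N1 v i"

definition condF2 :: "nat \<Rightarrow> nat \<Rightarrow> nat \<Rightarrow> (nat \<Rightarrow> real) \<Rightarrow> bool" where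
  "condF2 n N0 N1 v \<longleftrightarrow> inj_on (mu n N0 N1 v) {0..<N0}"

definition condF' :: "nat \<Rightarrow> (nat \<Rightarrow> real) \<Rightarrow> bool" where
  "condF' N0 v \<longleftrightarrow> (\<forall>j<N0. v j \<ge> v (j + 1) \<and> v (j + 1) > 0)"

end

theory Submission
  imports Defs
begin

text \<open>Below level \<open>N0\<close> the memory is negative, so the process can only move down until the memory
  vanishes; integrating the downward rate shows that from level \<open>x\<close> with memory \<open>y\<close> the next jump
  happens iff \<open>\<mu>\<^sub>x\<^sub>-\<^sub>1 E \<le> y\<^sup>2/2\<close>, and then \<open>y\<^sup>2/2\<close> drops by exactly
  \<open>\<mu>\<^sub>x\<^sub>-\<^sub>1 E\<close>. Hence the reversal level is \<open>N0 - m\<close>, where \<open>m\<close> counts the partial sums of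
  the independent exponential variables \<open>\<mu>\<^sub>N\<^sub>0\<^sub>-\<^sub>1\<^sub>-\<^sub>i E\<close> (rates
  \<open>1/\<mu>\<^sub>N\<^sub>0\<^sub>-\<^sub>1\<^sub>-\<^sub>i\<close>) that stay below \<open>l\<^sup>2/2\<close>, i.e.\ the state at time \<open>l\<^sup>2/2\<close> of a
  pure birth process with these rates. Solving its forward equations gives the stated partial-fraction
  formula, which needs the rates to be distinct: this is what (F2) or (F') provide.\<close>

section \<open>Partial fractions and the pure birth process\<close>

text \<open>The divided difference of the constant function 1 at the nodes \<open>r ` A\<close> is
  \<open>recip_prod_sum r A\<close> up to sign, so it vanishes as soon as there are two nodes.\<close>

definition recip_prod_sum :: "(nat \<Rightarrow> real) \<Rightarrow> nat set \<Rightarrow> real" where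
  "recip_prod_sum r A = (\<Sum>a\<in>A. \<Prod>b\<in>A - {a}. 1 / (r b - r a))"

lemma recip_prod_sum_insert2:
  assumes "finite B" "x \<notin> B" "y \<notin> B" "x \<noteq> y" and inj: "inj_on r (insert x (insert y B))"
  shows "recip_prod_sum r (insert x (insert y B)) =
         (recip_prod_sum r (insert x B) - recip_prod_sum r (insert y B)) / (r y - r x)"
proof -
  have rxy: "r y - r x \<noteq> 0" using inj_onD[OF inj, of y x] assms(4) by auto
  have ra: "r x - r a \<noteq> 0" "r y - r a \<noteq> 0" if "a \<in> B" for a
    using that assms inj_onD[OF inj, of x a] inj_onD[OF inj, of y a] by auto
  define P where "P a = (\<Prod>b\<in>B - {a}. 1 / (r b - r a))" for a
  define Qx where "Qx = (\<Prod>b\<in>B. 1 / (r b - r x))"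
  define Qy where "Qy = (\<Prod>b\<in>B. 1 / (r b - r y))"
  define SA where "SA = (\<Sum>a\<in>B. 1 / (r x - r a) * P a)"
  define SB where "SB = (\<Sum>a\<in>B. 1 / (r y - r a) * P a)"
  have del: "insert x (insert y B) - {x} = insert y B" "insert x (insert y B) - {y} = insert x B"
    "insert x B - {x} = B" "insert y B - {y} = B" using assms by auto
  have del_a: "insert x (insert y B) - {a} = insert x (insert y (B - {a}))"
    "insert x B - {a} = insert x (B - {a})" "insert y B - {a} = insert y (B - {a})"
    if "a \<in> B" for a using that assms by auto
  have xy: "recip_prod_sum r (insert x (insert y B)) =
      1 / (r y - r x) * Qx + 1 / (r x - r y) * Qy + (\<Sum>a\<in>B. 1 / (r x - r a) * (1 / (r y - r a)) * P a)"
    unfolding recip_prod_sum_def using assms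
    by (simp add: del del_a sum.insert prod.insert Qx_def Qy_def P_def cong: sum.cong)
  have x: "recip_prod_sum r (insert x B) = Qx + SA"
    unfolding recip_prod_sum_def SA_def using assms
    by (simp add: del del_a sum.insert prod.insert Qx_def P_def cong: sum.cong)
  have y: "recip_prod_sum r (insert y B) = Qy + SB"
    unfolding recip_prod_sum_def SB_def using assms
    by (simp add: del del_a sum.insert prod.insert Qy_def P_def cong: sum.cong)
  have "(\<Sum>a\<in>B. 1 / (r x - r a) * (1 / (r y - r a)) * P a) =
        (\<Sum>a\<in>B. (1 / (r x - r a) * P a - 1 / (r y - r a) * P a) / (r y - r x))"
  proof (rule sum.cong[OF refl])
    have partial_fractions: "1 / p * (1 / q) * c = (1 / p * c - 1 / q * c) / (q - p)"
      if "p \<noteq> 0" "q \<noteq> 0" "q \<noteq> p" for p q c :: real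
      using that by (simp add: field_simps)
    fix a assume "a \<in> B"
    with ra[of a] rxy partial_fractions[of "r x - r a" "r y - r a" "P a"]
    show "1 / (r x - r a) * (1 / (r y - r a)) * P a =
        (1 / (r x - r a) * P a - 1 / (r y - r a) * P a) / (r y - r x)"
      by auto
  qed
  also have "\<dots> = (SA - SB) / (r y - r x)"
    unfolding SA_def SB_def by (simp add: sum_divide_distrib[symmetric] sum_subtractf)
  finally have "recip_prod_sum r (insert x (insert y B)) =
      1 / (r y - r x) * Qx + 1 / (r x - r y) * Qy + (SA - SB) / (r y - r x)"
    using xy by simp
  also have "\<dots> = ((Qx + SA) - (Qy + SB)) / (r y - r x)"
  proof -
    have "1 / d * Qx + 1 / (- d) * Qy + (SA - SB) / d = ((Qx + SA) - (Qy + SB)) / d" if "d \<noteq> 0" for d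
      using that by (simp add: field_simps)
    from this[OF rxy] show ?thesis by simp
  qed
  finally show ?thesis unfolding x y .
qed

lemma recip_prod_sum_eq_0:
  "finite A \<Longrightarrow> 2 \<le> card A \<Longrightarrow> inj_on r A \<Longrightarrow> recip_prod_sum r A = 0"
proof (induction "card A" arbitrary: A rule: less_induct)
  case less
  obtain x where x: "x \<in> A" using less.prems by fastforce
  have "card (A - {x}) \<noteq> 0" using x less.prems by simp
  then obtain y where y: "y \<in> A - {x}" by (metis card.empty ex_in_conv)
  define B where "B = A - {x, y}"
  have A: "A = insert x (insert y B)" using x y unfolding B_def by auto
  have B: "finite B" "x \<notin> B" "y \<notin> B" "x \<noteq> y" using less.prems y unfolding B_def by auto
  show ?case
  proof (cases "B = {}")
    case True
    have "1 / (r x - r y) + 1 / (r y - r x) = 0"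
      by (metis add.right_inverse minus_diff_eq minus_divide_right)
    with B show ?thesis unfolding A True recip_prod_sum_def by (simp add: insert_Diff_if)
  next
    case False
    have smaller: "card (insert x B) < card A" "card (insert y B) < card A"
      "2 \<le> card (insert x B)" "2 \<le> card (insert y B)"
      using B False less.prems unfolding A by (auto simp: card_insert_if card_gt_0_iff Suc_le_eq)
    have "recip_prod_sum r (insert x B) = 0" "recip_prod_sum r (insert y B) = 0"
      using less.hyps[OF smaller(1) _ smaller(3)] less.hyps[OF smaller(2) _ smaller(4)] B less.prems A
      by (auto intro: inj_on_subset)
    then show ?thesis using recip_prod_sum_insert2[OF B] less.prems A by simp
  qed
qed

definition birth_coeff :: "(nat \<Rightarrow> real) \<Rightarrow> nat \<Rightarrow> nat \<Rightarrow> real" where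
  "birth_coeff r m j = (\<Prod>i\<in>{..m} - {j}. 1 / (r i - r j))"

text \<open>For distinct rates, \<open>pure_birth_prob r m x\<close> is the probability that a pure birth process
  with birth rates \<open>r 0, r 1, \<dots>\<close>, started in state 0, is in state \<open>m\<close> at time \<open>x\<close>; equivalently
  \<open>P(S\<^sub>m\<^sub>-\<^sub>1 \<le> x < S\<^sub>m)\<close> for the partial sums \<open>S\<close> of independent exponential variables
  with these rates (and \<open>S\<^sub>-\<^sub>1 = 0\<close>).\<close>

definition pure_birth_prob :: "(nat \<Rightarrow> real) \<Rightarrow> nat \<Rightarrow> real \<Rightarrow> real" where
  "pure_birth_prob r m x = (\<Prod>i<m. r i) * (\<Sum>j\<le>m. exp (- r j * x) * birth_coeff r m j)"

lemma pure_birth_prob_0: "pure_birth_prob r 0 x = exp (- r 0 * x)"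
  by (simp add: pure_birth_prob_def birth_coeff_def)

lemma pure_birth_prob_Suc_at_0:
  assumes "inj_on r {..Suc k}"
  shows "pure_birth_prob r (Suc k) 0 = 0"
proof -
  have "(\<Sum>j\<le>Suc k. birth_coeff r (Suc k) j) = recip_prod_sum r {..Suc k}"
    unfolding recip_prod_sum_def birth_coeff_def by simp
  also have "\<dots> = 0" by (rule recip_prod_sum_eq_0) (use assms in auto)
  finally show ?thesis by (simp add: pure_birth_prob_def)
qed

lemma birth_coeff_Suc:
  assumes "inj_on r {..Suc k}" "j \<le> k"
  shows "birth_coeff r (Suc k) j = birth_coeff r k j / (r (Suc k) - r j)"
proof -
  have "{..Suc k} - {j} = insert (Suc k) ({..k} - {j})" using assms by auto
  moreover have "r (Suc k) \<noteq> r j" using assms inj_onD[OF assms(1), of "Suc k" j] by auto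
  ultimately show ?thesis unfolding birth_coeff_def by (simp add: prod.insert field_simps)
qed

lemma continuous_on_pure_birth_prob: "continuous_on S (pure_birth_prob r m)"
  unfolding pure_birth_prob_def by (intro continuous_intros)

text \<open>Kolmogorov's forward equation of the pure birth process.\<close>

lemma pure_birth_prob_deriv_Suc:
  assumes inj: "inj_on r {..Suc k}"
  shows "(pure_birth_prob r (Suc k) has_real_derivative
           r k * pure_birth_prob r k x - r (Suc k) * pure_birth_prob r (Suc k) x) (at x)"
proof -
  define SD where "SD = (\<Sum>j\<le>Suc k. - r j * exp (- r j * x) * birth_coeff r (Suc k) j)"
  define SG where "SG m = (\<Sum>j\<le>m. exp (- r j * x) * birth_coeff r m j)" for m
  have G: "pure_birth_prob r m x = (\<Prod>i<m. r i) * SG m" for m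
    unfolding pure_birth_prob_def SG_def ..
  have deriv: "(pure_birth_prob r (Suc k) has_real_derivative (\<Prod>i<Suc k. r i) * SD) (at x)"
    unfolding pure_birth_prob_def SD_def
    by (auto intro!: derivative_eq_intros sum.cong simp: sum_distrib_left mult_ac)
  have "SD + r (Suc k) * SG (Suc k)
      = (\<Sum>j\<le>Suc k. (r (Suc k) - r j) * exp (- r j * x) * birth_coeff r (Suc k) j)"
    unfolding SD_def SG_def by (simp add: sum_distrib_left sum.distrib[symmetric] algebra_simps)
  also have "\<dots> = (\<Sum>j\<le>k. (r (Suc k) - r j) * exp (- r j * x) * birth_coeff r (Suc k) j)"
    by (simp add: atMost_Suc)
  also have "\<dots> = (\<Sum>j\<le>k. exp (- r j * x) * birth_coeff r k j)"
  proof (rule sum.cong[OF refl])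
    fix j assume "j \<in> {..k}"
    then have "r (Suc k) - r j \<noteq> 0" using inj_onD[OF inj, of "Suc k" j] by auto
    with \<open>j \<in> {..k}\<close> show "(r (Suc k) - r j) * exp (- r j * x) * birth_coeff r (Suc k) j =
        exp (- r j * x) * birth_coeff r k j"
      by (simp add: birth_coeff_Suc[OF inj])
  qed
  finally have "SD + r (Suc k) * SG (Suc k) = SG k" unfolding SG_def .
  then have "(\<Prod>i<Suc k. r i) * SD + r (Suc k) * pure_birth_prob r (Suc k) x
      = (\<Prod>i<Suc k. r i) * SG k"
    unfolding G by (metis distrib_left mult.left_commute)
  also have "\<dots> = r k * pure_birth_prob r k x"
    unfolding G by (simp add: lessThan_Suc)
  finally show ?thesis using deriv by (metis add_diff_cancel_right')
qed

lemma has_integral_pure_birth_prob_Suc: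
  assumes "inj_on r {..Suc k}" "0 \<le> w"
  shows "((\<lambda>y. r k * pure_birth_prob r k y - r (Suc k) * pure_birth_prob r (Suc k) y)
           has_integral pure_birth_prob r (Suc k) w) {0..w}"
proof -
  have "((\<lambda>y. r k * pure_birth_prob r k y - r (Suc k) * pure_birth_prob r (Suc k) y) has_integral
        (pure_birth_prob r (Suc k) w - pure_birth_prob r (Suc k) 0)) {0..w}"
    using pure_birth_prob_deriv_Suc[OF assms(1)] assms(2)
    by (intro fundamental_theorem_of_calculus)
       (auto simp: has_real_derivative_iff_has_vector_derivative[symmetric] has_field_derivative_at_within)
  then show ?thesis using pure_birth_prob_Suc_at_0[OF assms(1)] by simp
qed

lemma has_integral_pure_birth_prob_exp:
  assumes "inj_on r {..Suc k}" "0 \<le> x"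
  shows "((\<lambda>y. r k * pure_birth_prob r k y * exp (r (Suc k) * y)) has_integral
           pure_birth_prob r (Suc k) x * exp (r (Suc k) * x)) {0..x}"
proof -
  have "((\<lambda>y. pure_birth_prob r (Suc k) y * exp (r (Suc k) * y)) has_real_derivative
          r k * pure_birth_prob r k y * exp (r (Suc k) * y)) (at y)" for y
    by (auto intro!: derivative_eq_intros pure_birth_prob_deriv_Suc[OF assms(1)] simp: algebra_simps)
  then have "((\<lambda>y. r k * pure_birth_prob r k y * exp (r (Suc k) * y)) has_integral
        pure_birth_prob r (Suc k) x * exp (r (Suc k) * x)
        - pure_birth_prob r (Suc k) 0 * exp (r (Suc k) * 0)) {0..x}"
    using assms(2)
    by (intro fundamental_theorem_of_calculus)
       (auto simp: has_real_derivative_iff_has_vector_derivative[symmetric] has_field_derivative_at_within)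
  then show ?thesis using pure_birth_prob_Suc_at_0[OF assms(1)] by simp
qed

lemma pure_birth_prob_nonneg:
  assumes "\<And>i. i \<le> m \<Longrightarrow> 0 < r i" "inj_on r {..m}" "0 \<le> x"
  shows "0 \<le> pure_birth_prob r m x"
  using assms
proof (induction m arbitrary: x)
  case 0
  then show ?case by (simp add: pure_birth_prob_0)
next
  case (Suc k)
  have "inj_on r {..k}" using Suc.prems(2) by (rule inj_on_subset) auto
  then have IH: "0 \<le> pure_birth_prob r k y" if "0 \<le> y" for y
    using Suc.IH that Suc.prems(1) by auto
  have "0 \<le> pure_birth_prob r (Suc k) x * exp (r (Suc k) * x)"
    using has_integral_pure_birth_prob_exp[OF Suc.prems(2,3)]
    by (rule has_integral_nonneg) (use IH Suc.prems(1)[of k] in \<open>auto intro!: mult_nonneg_nonneg\<close>)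
  then show ?case by (simp add: zero_le_mult_iff)
qed

definition hypoexp_density :: "(nat \<Rightarrow> real) \<Rightarrow> nat \<Rightarrow> real \<Rightarrow> real" where
  "hypoexp_density r k x = (if x < 0 then 0 else r k * pure_birth_prob r k x)"

lemma hypoexp_density_convolution:
  assumes pos: "\<And>i. i \<le> Suc k \<Longrightarrow> 0 < r i" and inj: "inj_on r {..Suc k}"
  shows "(\<integral>\<^sup>+y. ennreal (exponential_density (r (Suc k)) (x - y)) * ennreal (hypoexp_density r k y) \<partial>lborel)
         = ennreal (hypoexp_density r (Suc k) x)"
proof (cases "x < 0")
  case True
  have "(\<integral>\<^sup>+y. ennreal (exponential_density (r (Suc k)) (x - y)) * ennreal (hypoexp_density r k y) \<partial>lborel)
      = (\<integral>\<^sup>+(y::real). 0 \<partial>lborel)"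
    by (rule nn_integral_cong) (use True in \<open>auto simp: hypoexp_density_def exponential_density_def\<close>)
  then show ?thesis using True by (simp add: hypoexp_density_def)
next
  case False
  then have x: "0 \<le> x" by simp
  have Gk: "0 \<le> pure_birth_prob r k y" if "0 \<le> y" for y
    by (rule pure_birth_prob_nonneg) (use pos inj that in \<open>auto intro: inj_on_subset\<close>)
  define f where "f y = r (Suc k) * exp (- x * r (Suc k)) * (r k * pure_birth_prob r k y * exp (r (Suc k) * y))" for y
  have "(f has_integral r (Suc k) * exp (- x * r (Suc k)) * (pure_birth_prob r (Suc k) x * exp (r (Suc k) * x))) {0..x}"
    unfolding f_def by (rule has_integral_mult_right[OF has_integral_pure_birth_prob_exp[OF inj x]])
  also have "r (Suc k) * exp (- x * r (Suc k)) * (pure_birth_prob r (Suc k) x * exp (r (Suc k) * x))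
      = hypoexp_density r (Suc k) x"
    using x by (simp add: hypoexp_density_def mult_exp_exp algebra_simps)
  finally have f: "(f has_integral hypoexp_density r (Suc k) x) {0..x}" .
  have f_nonneg: "0 \<le> f y" if "y \<in> {0..x}" for y
    using Gk[of y] pos[of k] pos[of "Suc k"] that unfolding f_def by auto
  have "(\<integral>\<^sup>+y. ennreal (exponential_density (r (Suc k)) (x - y)) * ennreal (hypoexp_density r k y) \<partial>lborel)
      = (\<integral>\<^sup>+y. ennreal (f y) * indicator {0..x} y \<partial>lborel)"
  proof (rule nn_integral_cong)
    fix y
    show "ennreal (exponential_density (r (Suc k)) (x - y)) * ennreal (hypoexp_density r k y)
        = ennreal (f y) * indicator {0..x} y"
    proof (cases "y \<in> {0..x}")
      case True
      have "exp (- (x - y) * r (Suc k)) = exp (- x * r (Suc k)) * exp (r (Suc k) * y)"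
        by (simp add: mult_exp_exp algebra_simps)
      then have "exponential_density (r (Suc k)) (x - y) * hypoexp_density r k y = f y"
        using True unfolding f_def hypoexp_density_def exponential_density_def by (simp add: algebra_simps)
      moreover have "0 \<le> exponential_density (r (Suc k)) (x - y)" "0 \<le> hypoexp_density r k y"
        using True pos[of k] pos[of "Suc k"] Gk[of y]
        by (auto simp: exponential_density_def hypoexp_density_def)
      ultimately show ?thesis using True by (simp add: ennreal_mult[symmetric])
    next
      case False
      then show ?thesis by (auto simp: exponential_density_def hypoexp_density_def)
    qed
  qed
  also have "\<dots> = ennreal (hypoexp_density r (Suc k) x)"
    by (rule nn_integral_has_integral_lebesgue'[OF f_nonneg f])
  finally show ?thesis .
qed

context prob_space
begin

lemma AE_exponential_pos:
  assumes distr: "distributed M lborel X (exponential_density r)" and "0 < r"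
  shows "AE \<omega> in M. 0 < X \<omega>"
proof -
  have [measurable]: "X \<in> borel_measurable M" using distributed_measurable[OF distr] by simp
  have "prob {\<omega>\<in>space M. X \<omega> \<le> 0} = 1 - exp (- 0 * r)"
    by (rule exponential_distributedD_le[OF distr]) (use \<open>0 < r\<close> in auto)
  then have "emeasure M {\<omega>\<in>space M. \<not> 0 < X \<omega>} = 0"
    by (simp add: emeasure_eq_measure not_less)
  then show ?thesis by (subst AE_iff_measurable[OF _ refl]) auto
qed

lemma distributed_hypoexp_sum:
  fixes X :: "nat \<Rightarrow> 'a \<Rightarrow> real"
  assumes pos: "\<And>i. i \<le> m \<Longrightarrow> 0 < r i" and inj: "inj_on r {..m}"
    and distr: "\<And>i. i \<le> m \<Longrightarrow> distributed M lborel (X i) (\<lambda>x. ennreal (exponential_density (r i) x))"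
    and indep: "indep_vars (\<lambda>_. borel) X {..m}"
    and "k \<le> m"
  shows "distributed M lborel (\<lambda>\<omega>. \<Sum>i\<le>k. X i \<omega>) (\<lambda>x. ennreal (hypoexp_density r k x))"
  using \<open>k \<le> m\<close>
proof (induction k)
  case 0
  have "(\<lambda>x. ennreal (hypoexp_density r 0 x)) = (\<lambda>x. ennreal (exponential_density (r 0) x))"
    by (auto simp: hypoexp_density_def exponential_density_def pure_birth_prob_0 mult_ac)
  then show ?case using distr[of 0] by simp
next
  case (Suc k)
  have "indep_var borel (X (Suc k)) borel (\<lambda>\<omega>. \<Sum>i\<in>{..k}. X i \<omega>)"
  proof (rule indep_vars_sum)
    show "indep_vars (\<lambda>_. borel) X (insert (Suc k) {..k})"
      by (rule indep_vars_subset[OF indep]) (use Suc.prems in auto)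
  qed auto
  moreover have "(\<integral>\<^sup>+y. ennreal (exponential_density (r (Suc k)) (x - y)) * ennreal (hypoexp_density r k y) \<partial>lborel)
      = ennreal (hypoexp_density r (Suc k) x)" for x
    by (rule hypoexp_density_convolution) (use pos inj Suc.prems in \<open>auto intro: inj_on_subset\<close>)
  ultimately have "distributed M lborel (\<lambda>\<omega>. X (Suc k) \<omega> + (\<Sum>i\<in>{..k}. X i \<omega>))
          (\<lambda>x. ennreal (hypoexp_density r (Suc k) x))"
    using distributed_convolution[OF _ distr[OF Suc.prems] Suc.IH] Suc.prems by simp
  then show ?case by (simp add: atMost_Suc add.commute)
qed

lemma prob_hypoexp_sum_le:
  fixes X :: "nat \<Rightarrow> 'a \<Rightarrow> real"
  assumes pos: "\<And>i. i \<le> m \<Longrightarrow> 0 < r i" and inj: "inj_on r {..m}"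
    and distr: "\<And>i. i \<le> m \<Longrightarrow> distributed M lborel (X i) (\<lambda>x. ennreal (exponential_density (r i) x))"
    and indep: "indep_vars (\<lambda>_. borel) X {..m}"
    and "j \<le> m" "0 \<le> w"
  shows "prob {\<omega>\<in>space M. (\<Sum>i\<le>j. X i \<omega>) \<le> w} = integral {0..w} (\<lambda>y. r j * pure_birth_prob r j y)"
proof -
  have nonneg: "0 \<le> r j * pure_birth_prob r j y" if "y \<in> {0..w}" for y
  proof -
    have "0 \<le> pure_birth_prob r j y"
      by (rule pure_birth_prob_nonneg) (use pos inj that \<open>j \<le> m\<close> in \<open>auto intro: inj_on_subset\<close>)
    then show ?thesis using pos[of j] \<open>j \<le> m\<close> by simp
  qed
  have int: "((\<lambda>y. r j * pure_birth_prob r j y) has_integral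
               integral {0..w} (\<lambda>y. r j * pure_birth_prob r j y)) {0..w}"
    by (intro integrable_integral integrable_continuous_interval continuous_intros
        continuous_on_pure_birth_prob)
  have "emeasure M ((\<lambda>\<omega>. \<Sum>i\<le>j. X i \<omega>) -` {..w} \<inter> space M)
      = (\<integral>\<^sup>+x. ennreal (hypoexp_density r j x) * indicator {..w} x \<partial>lborel)"
    by (rule distributed_emeasure[OF distributed_hypoexp_sum[OF pos inj distr indep \<open>j \<le> m\<close>]]) measurable
  also have "\<dots> = (\<integral>\<^sup>+x. ennreal (r j * pure_birth_prob r j x) * indicator {0..w} x \<partial>lborel)"
    by (rule nn_integral_cong) (auto simp: hypoexp_density_def indicator_def)
  also have "\<dots> = ennreal (integral {0..w} (\<lambda>y. r j * pure_birth_prob r j y))"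
    by (rule nn_integral_has_integral_lebesgue'[OF nonneg int])
  finally show ?thesis
    using has_integral_nonneg[OF int nonneg]
    by (simp add: emeasure_eq_measure vimage_def Int_def conj_commute)
qed

lemma prob_hypoexp_between:
  fixes X :: "nat \<Rightarrow> 'a \<Rightarrow> real"
  assumes pos: "\<And>i. i \<le> m \<Longrightarrow> 0 < r i" and inj: "inj_on r {..m}"
    and distr: "\<And>i. i \<le> m \<Longrightarrow> distributed M lborel (X i) (\<lambda>x. ennreal (exponential_density (r i) x))"
    and indep: "indep_vars (\<lambda>_. borel) X {..m}"
    and "Suc k \<le> m" and w: "0 \<le> w"
  shows "prob {\<omega>\<in>space M. (\<Sum>i\<le>k. X i \<omega>) \<le> w \<and> w < (\<Sum>i\<le>k. X i \<omega>) + X (Suc k) \<omega>}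
         = pure_birth_prob r (Suc k) w"
proof -
  have [measurable]: "X i \<in> borel_measurable M" if "i \<le> m" for i
    using distributed_measurable[OF distr[OF that]] by simp
  define S where "S \<omega> = (\<Sum>i\<le>k. X i \<omega>)" for \<omega>
  define T where "T \<omega> = (\<Sum>i\<le>Suc k. X i \<omega>)" for \<omega>
  have T: "T \<omega> = S \<omega> + X (Suc k) \<omega>" for \<omega> by (simp add: S_def T_def atMost_Suc)
  have [measurable]: "S \<in> borel_measurable M" "T \<in> borel_measurable M"
    unfolding S_def T_def using \<open>Suc k \<le> m\<close> by (auto intro!: borel_measurable_sum)
  have X_nonneg: "AE \<omega> in M. 0 \<le> X (Suc k) \<omega>"
    using AE_exponential_pos[OF distr[OF \<open>Suc k \<le> m\<close>] pos[OF \<open>Suc k \<le> m\<close>]]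
    by (rule AE_mp) (auto intro!: AE_I2)
  have same: "prob {\<omega>\<in>space M. S \<omega> \<le> w \<and> T \<omega> \<le> w} = prob {\<omega>\<in>space M. T \<omega> \<le> w}"
  proof (rule prob_eq_AE)
    show "AE \<omega> in M. (S \<omega> \<le> w \<and> T \<omega> \<le> w) \<longleftrightarrow> T \<omega> \<le> w"
      using X_nonneg by (rule AE_mp) (auto intro!: AE_I2 simp: T)
  qed auto
  have "prob {\<omega>\<in>space M. S \<omega> \<le> w \<and> w < T \<omega>}
      = prob ({\<omega>\<in>space M. S \<omega> \<le> w} - {\<omega>\<in>space M. S \<omega> \<le> w \<and> T \<omega> \<le> w})"
    by (rule arg_cong[where f=prob]) auto
  also have "\<dots> = prob {\<omega>\<in>space M. S \<omega> \<le> w} - prob {\<omega>\<in>space M. T \<omega> \<le> w}"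
    by (subst finite_measure_Diff) (auto simp: same)
  also have "\<dots> = integral {0..w} (\<lambda>y. r k * pure_birth_prob r k y)
                 - integral {0..w} (\<lambda>y. r (Suc k) * pure_birth_prob r (Suc k) y)"
    using prob_hypoexp_sum_le[OF pos inj distr indep, of k w]
      prob_hypoexp_sum_le[OF pos inj distr indep, of "Suc k" w] \<open>Suc k \<le> m\<close> w
    unfolding S_def T_def by simp
  also have "\<dots> = integral {0..w} (\<lambda>y. r k * pure_birth_prob r k y - r (Suc k) * pure_birth_prob r (Suc k) y)"
    by (rule integral_diff[symmetric])
       (auto intro!: integrable_continuous_interval continuous_intros continuous_on_pure_birth_prob)
  also have "\<dots> = pure_birth_prob r (Suc k) w"
    using has_integral_pure_birth_prob_Suc[of r k w] inj w \<open>Suc k \<le> m\<close>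
    by (auto intro: integral_unique inj_on_subset)
  finally show ?thesis by (simp add: S_def T)
qed

end

section \<open>Clocks driven by a linear rate\<close>

definition half_pos_sq :: "real \<Rightarrow> real" where
  "half_pos_sq z = (max z 0)\<^sup>2 / 2"

lemma half_pos_sq_deriv: "(half_pos_sq has_real_derivative max z 0) (at z)"
proof (cases "z = 0")
  case False
  show ?thesis
  proof (cases "z > 0")
    case True
    have "((\<lambda>z. z\<^sup>2 / 2) has_real_derivative max z 0) (at z)"
      using True by (auto intro!: derivative_eq_intros)
    then show ?thesis
      by (rule has_field_derivative_transform_within_open[of _ _ _ "{0<..}"])
         (use True in \<open>auto simp: half_pos_sq_def\<close>)
  next
    case False
    with \<open>z \<noteq> 0\<close> have "z < 0" by simp
    have "((\<lambda>z. 0) has_real_derivative max z 0) (at z)"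
      using \<open>z < 0\<close> by simp
    then show ?thesis
      by (rule has_field_derivative_transform_within_open[of _ _ _ "{..<0}"])
         (use \<open>z < 0\<close> in \<open>auto simp: half_pos_sq_def\<close>)
  qed
next
  case True
  have "((\<lambda>h::real. max h 0 / 2) \<longlongrightarrow> 0) (at 0)"
    by (rule tendsto_eq_intros) (auto intro!: tendsto_eq_intros)
  then have "((\<lambda>h. (half_pos_sq (0 + h) - half_pos_sq 0) / h) \<longlongrightarrow> 0) (at (0::real))"
  proof (rule Lim_transform_within[where d=1])
    fix h :: real assume "0 < dist h 0"
    then show "max h 0 / 2 = (half_pos_sq (0 + h) - half_pos_sq 0) / h"
      by (cases "h > 0") (auto simp: half_pos_sq_def power2_eq_square max_def)
  qed simp
  then show ?thesis using True by (simp add: has_field_derivative_iff)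
qed

lemma half_pos_sq_mono: "a \<le> b \<Longrightarrow> half_pos_sq a \<le> half_pos_sq b"
  unfolding half_pos_sq_def by (intro divide_right_mono power_mono) auto

definition ramp_integral :: "real \<Rightarrow> real \<Rightarrow> real \<Rightarrow> real \<Rightarrow> real" where
  "ramp_integral c \<alpha> \<beta> u =
     (if \<beta> = 0 then c * max \<alpha> 0 * u else c * (half_pos_sq (\<alpha> + \<beta> * u) - half_pos_sq \<alpha>) / \<beta>)"

lemma integral_ramp:
  assumes "0 \<le> u"
  shows "integral {0..u} (\<lambda>s. c * max (\<alpha> + \<beta> * s) 0) = ramp_integral c \<alpha> \<beta> u"
proof (cases "\<beta> = 0")
  case True
  then show ?thesis
    using integral_unique[OF has_integral_const_real[of "c * max \<alpha> 0" 0 u]] assms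
    by (simp add: ramp_integral_def mult.commute)
next
  case False
  have "((\<lambda>s. c * max (\<alpha> + \<beta> * s) 0) has_integral
          c * half_pos_sq (\<alpha> + \<beta> * u) / \<beta> - c * half_pos_sq (\<alpha> + \<beta> * 0) / \<beta>) {0..u}"
  proof (rule fundamental_theorem_of_calculus[OF assms])
    fix s
    have "((\<lambda>s. c * half_pos_sq (\<alpha> + \<beta> * s) / \<beta>) has_real_derivative
            c * (max (\<alpha> + \<beta> * s) 0 * \<beta>) / \<beta>) (at s)"
      by (intro DERIV_cdivide DERIV_cmult DERIV_chain2[OF half_pos_sq_deriv])
         (auto intro!: derivative_eq_intros)
    then show "((\<lambda>s. c * half_pos_sq (\<alpha> + \<beta> * s) / \<beta>) has_vector_derivative
                c * max (\<alpha> + \<beta> * s) 0) (at s within {0..u})"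
      using False
      by (simp add: has_real_derivative_iff_has_vector_derivative[symmetric] has_field_derivative_at_within)
  qed
  then have "integral {0..u} (\<lambda>s. c * max (\<alpha> + \<beta> * s) 0)
      = c * half_pos_sq (\<alpha> + \<beta> * u) / \<beta> - c * half_pos_sq \<alpha> / \<beta>"
    by (intro integral_unique) simp
  then show ?thesis
    using False by (simp add: ramp_integral_def diff_divide_distrib right_diff_distrib)
qed

lemma ramp_integral_mono:
  assumes "0 \<le> c" "0 \<le> u" "u \<le> u'"
  shows "ramp_integral c \<alpha> \<beta> u \<le> ramp_integral c \<alpha> \<beta> u'"
proof (cases "\<beta>" "0::real" rule: linorder_cases)
  case less
  have "half_pos_sq (\<alpha> + \<beta> * u') \<le> half_pos_sq (\<alpha> + \<beta> * u)"
    by (rule half_pos_sq_mono) (use less assms in \<open>simp add: mult_left_mono_neg\<close>)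
  then have "c * (half_pos_sq (\<alpha> + \<beta> * u') - half_pos_sq \<alpha>) \<le> c * (half_pos_sq (\<alpha> + \<beta> * u) - half_pos_sq \<alpha>)"
    using assms by (intro mult_left_mono) auto
  then show ?thesis using less unfolding ramp_integral_def by (auto intro: divide_right_mono_neg)
next
  case equal
  then show ?thesis using assms by (simp add: ramp_integral_def mult_left_mono)
next
  case greater
  have "half_pos_sq (\<alpha> + \<beta> * u) \<le> half_pos_sq (\<alpha> + \<beta> * u')"
    by (rule half_pos_sq_mono) (use greater assms in \<open>simp add: mult_left_mono\<close>)
  then show ?thesis using greater assms unfolding ramp_integral_def
    by (auto intro!: divide_right_mono mult_left_mono)
qed

definition ramp_clock :: "real \<Rightarrow> real \<Rightarrow> real \<Rightarrow> real \<Rightarrow> ereal" where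
  "ramp_clock c \<alpha> \<beta> e = Inf {ereal u | u. 0 < u \<and> e \<le> ramp_integral c \<alpha> \<beta> u}"

lemma ramp_clock_less_iff:
  assumes c: "0 \<le> c"
  shows "ramp_clock c \<alpha> \<beta> e < y \<longleftrightarrow> (\<exists>q\<in>\<rat>. 0 < q \<and> ereal q < y \<and> e \<le> ramp_integral c \<alpha> \<beta> q)"
proof
  assume "ramp_clock c \<alpha> \<beta> e < y"
  then obtain u where u: "ereal u < y" "0 < u" "e \<le> ramp_integral c \<alpha> \<beta> u"
    unfolding ramp_clock_def by (auto simp: Inf_less_iff)
  obtain q where q: "q \<in> \<rat>" "u < q" "ereal q < y"
  proof (cases y)
    case (real r)
    with u obtain q where "q \<in> \<rat>" "u < q" "q < r" using Rats_dense_in_real[of u r] by auto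
    then show ?thesis using that real by auto
  next
    case PInf
    obtain q where "q \<in> \<rat>" "u < q" "q < u + 1" using Rats_dense_in_real[of u "u + 1"] by auto
    then show ?thesis using that PInf by auto
  qed (use u in simp)
  have "e \<le> ramp_integral c \<alpha> \<beta> q"
    using u(3) ramp_integral_mono[OF c, of u q \<alpha> \<beta>] u(2) q(2) by simp
  then show "\<exists>q\<in>\<rat>. 0 < q \<and> ereal q < y \<and> e \<le> ramp_integral c \<alpha> \<beta> q"
    using q u by (intro bexI[of _ q]) auto
next
  assume "\<exists>q\<in>\<rat>. 0 < q \<and> ereal q < y \<and> e \<le> ramp_integral c \<alpha> \<beta> q"
  then obtain q where q: "0 < q" "ereal q < y" "e \<le> ramp_integral c \<alpha> \<beta> q" by auto
  have "ramp_clock c \<alpha> \<beta> e \<le> ereal q" unfolding ramp_clock_def by (rule Inf_lower) (use q in auto)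
  then show "ramp_clock c \<alpha> \<beta> e < y" using q(2) by simp
qed

lemma borel_measurable_ramp_integral[measurable]:
  assumes [measurable]: "f \<in> borel_measurable M"
  shows "(\<lambda>\<omega>. ramp_integral c (f \<omega>) \<beta> q) \<in> borel_measurable M"
  unfolding ramp_integral_def half_pos_sq_def by measurable

lemma borel_measurable_ramp_clock:
  assumes c: "0 \<le> c" and [measurable]: "f \<in> borel_measurable M" "g \<in> borel_measurable M"
  shows "(\<lambda>\<omega>. ramp_clock c (f \<omega>) \<beta> (g \<omega>)) \<in> borel_measurable M"
proof (rule borel_measurableI_less)
  fix y
  have "{\<omega>\<in>space M. ramp_clock c (f \<omega>) \<beta> (g \<omega>) < y}
      = (\<Union>q\<in>\<rat>. {\<omega>\<in>space M. 0 < q \<and> ereal q < y \<and> g \<omega> \<le> ramp_integral c (f \<omega>) \<beta> q})"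
    using ramp_clock_less_iff[OF c] by auto
  also have "\<dots> \<in> sets M"
    by (intro sets.countable_UN'' countable_rat) measurable
  finally show "{\<omega>\<in>space M. ramp_clock c (f \<omega>) \<beta> (g \<omega>) < y} \<in> sets M" .
qed

lemma ramp_clock_eqI:
  assumes "0 < t" "e \<le> ramp_integral c \<alpha> \<beta> t"
    and "\<And>u. 0 < u \<Longrightarrow> e \<le> ramp_integral c \<alpha> \<beta> u \<Longrightarrow> t \<le> u"
  shows "ramp_clock c \<alpha> \<beta> e = ereal t"
  unfolding ramp_clock_def
  by (rule antisym; (rule Inf_lower | rule Inf_greatest)) (use assms in auto)

lemma ramp_clock_eq_infinity:
  assumes "\<And>u. 0 < u \<Longrightarrow> ramp_integral c \<alpha> \<beta> u < e"
  shows "ramp_clock c \<alpha> \<beta> e = \<infinity>"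
proof -
  have empty: "{ereal u |u. 0 < u \<and> e \<le> ramp_integral c \<alpha> \<beta> u} = {}" using assms by force
  show ?thesis unfolding ramp_clock_def empty by (simp add: top_ereal_def)
qed

lemma ramp_clock_zero_coeff: "0 < e \<Longrightarrow> ramp_clock 0 \<alpha> \<beta> e = \<infinity>"
  by (rule ramp_clock_eq_infinity) (simp add: ramp_integral_def)

lemma ramp_clock_rising:
  assumes c: "0 < c" and w: "0 < w" and y: "y \<le> 0" and e: "0 < e"
  shows "ramp_clock c y w e = ereal ((sqrt (2 * e * w / c) - y) / w)"
proof (rule ramp_clock_eqI)
  define q where "q = sqrt (2 * e * w / c)"
  have q0: "0 < q" unfolding q_def using c w e by simp
  have qq: "q\<^sup>2 = 2 * e * w / c" unfolding q_def using c w e by simp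
  have R: "ramp_integral c y w u = c * half_pos_sq (y + w * u) / w" for u
    using w y by (simp add: ramp_integral_def half_pos_sq_def)
  show "0 < (q - y) / w" using q0 y w by simp
  have "y + w * ((q - y) / w) = q" using w by simp
  then have "ramp_integral c y w ((q - y) / w) = c * (q\<^sup>2 / 2) / w"
    unfolding R half_pos_sq_def using q0 by simp
  also have "\<dots> = e" unfolding qq using c w by simp
  finally show "e \<le> ramp_integral c y w ((q - y) / w)" by simp
  fix u assume "0 < u" "e \<le> ramp_integral c y w u"
  then have "e * w / c \<le> half_pos_sq (y + w * u)" unfolding R using c w by (simp add: field_simps)
  then have "q\<^sup>2 \<le> (max (y + w * u) 0)\<^sup>2" unfolding qq half_pos_sq_def by (simp add: field_simps)
  then have "q \<le> max (y + w * u) 0" using q0 by (simp add: power2_le_iff_abs_le)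
  then have "q \<le> y + w * u" using q0 by (simp add: max_def split: if_splits)
  then show "(q - y) / w \<le> u" using w by (simp add: field_simps)
qed

lemma ramp_clock_falling:
  assumes c: "0 < c" and w: "0 < w" and y: "y < 0" and e: "0 < e" and le: "e * w / c \<le> y\<^sup>2 / 2"
  shows "ramp_clock c (- y) (- w) e = ereal ((- y - sqrt (y\<^sup>2 - 2 * (e * w / c))) / w)"
proof (rule ramp_clock_eqI)
  define q where "q = sqrt (y\<^sup>2 - 2 * (e * w / c))"
  have "0 \<le> y\<^sup>2 - 2 * (e * w / c)" using le by linarith
  then have q0: "0 \<le> q" and qq: "q\<^sup>2 = y\<^sup>2 - 2 * (e * w / c)" unfolding q_def by simp_all
  have "q\<^sup>2 < \<bar>y\<bar>\<^sup>2" using qq e w c by simp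
  then have qy: "q < - y" using y power_less_imp_less_base[of q 2 "\<bar>y\<bar>"] by simp
  have R: "ramp_integral c (- y) (- w) u = c * (half_pos_sq (- y) - half_pos_sq (- y - w * u)) / w" for u
    using w by (simp add: ramp_integral_def field_simps)
  show "0 < (- y - q) / w" using qy w by simp
  have "- y - w * ((- y - q) / w) = q" using w by simp
  then have "ramp_integral c (- y) (- w) ((- y - q) / w) = c * (y\<^sup>2 / 2 - q\<^sup>2 / 2) / w"
    unfolding R half_pos_sq_def using q0 y by simp
  also have "\<dots> = e" unfolding qq using c w by (simp add: field_simps)
  finally show "e \<le> ramp_integral c (- y) (- w) ((- y - q) / w)" by simp
  fix u assume "0 < u" "e \<le> ramp_integral c (- y) (- w) u"
  then have "e * w / c \<le> half_pos_sq (- y) - half_pos_sq (- y - w * u)"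
    unfolding R using c w by (simp add: field_simps)
  then have "(max (- y - w * u) 0)\<^sup>2 \<le> q\<^sup>2" unfolding qq half_pos_sq_def using y by (simp add: field_simps)
  then have "- y - w * u \<le> q" using q0 by (simp add: power2_le_iff_abs_le)
  then show "(- y - q) / w \<le> u" using w by (simp add: field_simps)
qed

lemma ramp_clock_falling_infinity:
  assumes c: "0 < c" and w: "0 < w" and e: "0 < e" and gt: "y\<^sup>2 / 2 < e * w / c"
  shows "ramp_clock c (- y) (- w) e = \<infinity>"
proof (rule ramp_clock_eq_infinity)
  fix u :: real assume "0 < u"
  have "ramp_integral c (- y) (- w) u = c * (half_pos_sq (- y) - half_pos_sq (- y - w * u)) / w"
    using w by (simp add: ramp_integral_def field_simps)
  also have "\<dots> \<le> c * half_pos_sq (- y) / w"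
    using c w by (intro divide_right_mono mult_left_mono) (auto simp: half_pos_sq_def)
  also have "\<dots> \<le> c * (y\<^sup>2 / 2) / w"
  proof -
    have "(max (- y) 0)\<^sup>2 \<le> y\<^sup>2" by (cases "y \<le> 0") (auto simp: max_def)
    then show ?thesis using c w by (intro divide_right_mono mult_left_mono) (auto simp: half_pos_sq_def)
  qed
  also have "\<dots> < e" using gt c w by (simp add: field_simps)
  finally show "ramp_integral c (- y) (- w) u < e" .
qed

definition jump_coeff :: "nat \<Rightarrow> nat \<Rightarrow> nat \<Rightarrow> (nat \<Rightarrow> real) \<Rightarrow> nat \<Rightarrow> nat \<Rightarrow> real" where
  "jump_coeff n N0 N1 v x j =
     (if j = x + 1 \<and> x \<le> n - 1 then cc n N0 N1 v x
      else if x = j + 1 \<and> j \<le> n - 1 then cc n N0 N1 v j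
      else 0)"

definition jump_sign :: "nat \<Rightarrow> nat \<Rightarrow> nat \<Rightarrow> real" where
  "jump_sign n x j = (if j = x + 1 \<and> x \<le> n - 1 then 1 else -1)"

lemma noiseless_rate_eq:
  "noiseless_rate n N0 N1 v x j z = jump_coeff n N0 N1 v x j * max (jump_sign n x j * z) 0"
  unfolding noiseless_rate_def jump_coeff_def jump_sign_def by auto

lemma clock_time_noiseless:
  "clock_time v (noiseless_rate n N0 N1 v) x y j e =
     ramp_clock (jump_coeff n N0 N1 v x j) (jump_sign n x j * y) (jump_sign n x j * v x) e"
proof -
  have "integral {0..u} (\<lambda>s. noiseless_rate n N0 N1 v x j (y + v x * s)) =
        ramp_integral (jump_coeff n N0 N1 v x j) (jump_sign n x j * y) (jump_sign n x j * v x) u"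
    if "0 < u" for u
    using that integral_ramp[of u "jump_coeff n N0 N1 v x j" "jump_sign n x j * y" "jump_sign n x j * v x"]
    unfolding noiseless_rate_eq by (simp add: algebra_simps)
  then show ?thesis unfolding clock_time_def ramp_clock_def by (metis (no_types, lifting))
qed

lemma cc_nonneg:
  assumes "noiseless_memory n N0 N1 v"
  shows "0 \<le> cc n N0 N1 v i"
proof -
  have "0 \<le> sum v {0..i}" if "i \<le> N0"
    using assms that unfolding noiseless_memory_def by (intro sum_nonneg) (auto intro: less_imp_le)
  then show ?thesis unfolding cc_def by (auto intro!: sum_nonneg)
qed

lemma jump_coeff_nonneg: "noiseless_memory n N0 N1 v \<Longrightarrow> 0 \<le> jump_coeff n N0 N1 v x j"
  using cc_nonneg unfolding jump_coeff_def by auto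

lemma borel_measurable_clock_time_noiseless:
  assumes "noiseless_memory n N0 N1 v"
    and [measurable]: "Y \<in> borel_measurable M" "g \<in> borel_measurable M"
  shows "(\<lambda>\<omega>. clock_time v (noiseless_rate n N0 N1 v) x (Y \<omega>) j (g \<omega>)) \<in> borel_measurable M"
  unfolding clock_time_noiseless
  by (rule borel_measurable_ramp_clock[OF jump_coeff_nonneg[OF assms(1)]]) measurable

lemma borel_measurable_hold_time_noiseless:
  assumes nm: "noiseless_memory n N0 N1 v"
    and X: "X \<in> measurable M (count_space UNIV)" and Y: "Y \<in> borel_measurable M"
    and e: "\<And>j. j \<le> n \<Longrightarrow> (\<lambda>\<omega>. e j \<omega>) \<in> borel_measurable M"
  shows "(\<lambda>\<omega>. hold_time n v (noiseless_rate n N0 N1 v) (X \<omega>) (Y \<omega>) (\<lambda>j. e j \<omega>)) \<in> borel_measurable M"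
proof (rule measurable_compose_countable[OF _ X])
  fix x :: nat
  show "(\<lambda>\<omega>. hold_time n v (noiseless_rate n N0 N1 v) x (Y \<omega>) (\<lambda>j. e j \<omega>)) \<in> borel_measurable M"
    unfolding hold_time_def
    by (rule borel_measurable_Min) (auto intro!: borel_measurable_clock_time_noiseless[OF nm Y] e)
qed

lemma measurable_next_level_noiseless:
  assumes nm: "noiseless_memory n N0 N1 v"
    and X: "X \<in> measurable M (count_space UNIV)" and Y: "Y \<in> borel_measurable M"
    and e: "\<And>j. j \<le> n \<Longrightarrow> (\<lambda>\<omega>. e j \<omega>) \<in> borel_measurable M"
  shows "(\<lambda>\<omega>. next_level n v (noiseless_rate n N0 N1 v) (X \<omega>) (Y \<omega>) (\<lambda>j. e j \<omega>))
           \<in> measurable M (count_space UNIV)"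
proof (rule measurable_compose_countable[OF _ X])
  fix x :: nat
  have [measurable]: "(\<lambda>\<omega>. hold_time n v (noiseless_rate n N0 N1 v) x (Y \<omega>) (\<lambda>j. e j \<omega>)) \<in> borel_measurable M"
    using borel_measurable_hold_time_noiseless[OF nm measurable_const Y e, of x] by simp
  have "Measurable.pred M (\<lambda>\<omega>. j \<le> n \<and> clock_time v (noiseless_rate n N0 N1 v) x (Y \<omega>) j (e j \<omega>) =
          hold_time n v (noiseless_rate n N0 N1 v) x (Y \<omega>) (\<lambda>j. e j \<omega>))" for j
  proof (cases "j \<le> n")
    case True
    have [measurable]: "(\<lambda>\<omega>. clock_time v (noiseless_rate n N0 N1 v) x (Y \<omega>) j (e j \<omega>)) \<in> borel_measurable M"
      by (rule borel_measurable_clock_time_noiseless[OF nm Y e[OF True]])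
    show ?thesis using True by measurable
  qed simp
  then show "(\<lambda>\<omega>. next_level n v (noiseless_rate n N0 N1 v) x (Y \<omega>) (\<lambda>j. e j \<omega>)) \<in> measurable M (count_space UNIV)"
    unfolding next_level_def by (rule measurable_Least)
qed

lemma jump_chain_Suc_let:
  "jump_chain n v a x0 y0 e (Suc k) =
    (let T = fst (jump_chain n v a x0 y0 e k); x = fst (snd (jump_chain n v a x0 y0 e k));
         y = snd (snd (jump_chain n v a x0 y0 e k)); h = hold_time n v a x y (\<lambda>j. e j k) in
     if T = \<infinity> \<or> h = \<infinity> then (\<infinity>, x, y)
     else (T + h, next_level n v a x y (\<lambda>j. e j k), y + v x * real_of_ereal h))"
  by (cases "jump_chain n v a x0 y0 e k") (simp add: Let_def)

lemma measurable_jump_chain_noiseless: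
  assumes nm: "noiseless_memory n N0 N1 v"
    and E: "\<And>j k. j \<le> n \<Longrightarrow> (\<lambda>\<omega>. E j k \<omega>) \<in> borel_measurable M"
  shows "(\<lambda>\<omega>. fst (jump_chain n v (noiseless_rate n N0 N1 v) x0 y0 (\<lambda>j k. E j k \<omega>) k)) \<in> borel_measurable M \<and>
    (\<lambda>\<omega>. fst (snd (jump_chain n v (noiseless_rate n N0 N1 v) x0 y0 (\<lambda>j k. E j k \<omega>) k)))
      \<in> measurable M (count_space UNIV) \<and>
    (\<lambda>\<omega>. snd (snd (jump_chain n v (noiseless_rate n N0 N1 v) x0 y0 (\<lambda>j k. E j k \<omega>) k))) \<in> borel_measurable M"
proof (induction k)
  case 0
  then show ?case by simp
next
  case (Suc k)
  let ?a = "noiseless_rate n N0 N1 v"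
  define T where "T \<omega> = fst (jump_chain n v ?a x0 y0 (\<lambda>j k. E j k \<omega>) k)" for \<omega>
  define X where "X \<omega> = fst (snd (jump_chain n v ?a x0 y0 (\<lambda>j k. E j k \<omega>) k))" for \<omega>
  define Y where "Y \<omega> = snd (snd (jump_chain n v ?a x0 y0 (\<lambda>j k. E j k \<omega>) k))" for \<omega>
  define H where "H \<omega> = hold_time n v ?a (X \<omega>) (Y \<omega>) (\<lambda>j. E j k \<omega>)" for \<omega>
  define NL where "NL \<omega> = next_level n v ?a (X \<omega>) (Y \<omega>) (\<lambda>j. E j k \<omega>)" for \<omega>
  have [measurable]: "T \<in> borel_measurable M" "X \<in> measurable M (count_space UNIV)" "Y \<in> borel_measurable M"
    using Suc.IH unfolding T_def X_def Y_def by auto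
  have [measurable]: "H \<in> borel_measurable M"
    unfolding H_def by (rule borel_measurable_hold_time_noiseless[OF nm]) (auto intro: E)
  have [measurable]: "NL \<in> measurable M (count_space UNIV)"
    unfolding NL_def by (rule measurable_next_level_noiseless[OF nm]) (auto intro: E)
  have [measurable]: "(\<lambda>\<omega>. v (X \<omega>)) \<in> borel_measurable M"
    by (rule measurable_compose_countable[where g=X]) auto
  have step: "jump_chain n v ?a x0 y0 (\<lambda>j k. E j k \<omega>) (Suc k) =
     (if T \<omega> = \<infinity> \<or> H \<omega> = \<infinity> then (\<infinity>, X \<omega>, Y \<omega>)
      else (T \<omega> + H \<omega>, NL \<omega>, Y \<omega> + v (X \<omega>) * real_of_ereal (H \<omega>)))" for \<omega>
    unfolding jump_chain_Suc_let T_def X_def Y_def H_def NL_def Let_def by simp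
  have stop[measurable]: "Measurable.pred M (\<lambda>\<omega>. T \<omega> = \<infinity> \<or> H \<omega> = \<infinity>)" by measurable
  show ?case
    unfolding step fst_conv snd_conv if_distrib[of fst] if_distrib[of snd]
    by (intro conjI; rule measurable_If[OF _ _ stop[unfolded Measurable.pred_def]]) auto
qed

section \<open>Pathwise analysis of the jump chain\<close>

declare jump_chain.simps(2)[simp del]

lemma clock_time_nonneg: "0 \<le> clock_time v a x y j e"
  unfolding clock_time_def by (rule Inf_greatest) auto

lemma hold_time_nonneg: "0 \<le> hold_time n v a x y e"
  unfolding hold_time_def by (subst Min_ge_iff) (auto simp: clock_time_nonneg)

lemma affine_nonneg_before_iff:
  fixes a s Y \<beta> :: real and U :: ereal
  shows "(\<exists>t. a \<le> t \<and> ereal t < U \<and> t < s \<and> 0 \<le> Y + \<beta> * (t - a)) \<longleftrightarrow>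
    ereal a < U \<and> a < s \<and> (0 \<le> Y \<or> (0 < \<beta> \<and> a - Y / \<beta> < s \<and> ereal (a - Y / \<beta>) < U))"
proof
  assume "\<exists>t. a \<le> t \<and> ereal t < U \<and> t < s \<and> 0 \<le> Y + \<beta> * (t - a)"
  then obtain t where t: "a \<le> t" "ereal t < U" "t < s" "0 \<le> Y + \<beta> * (t - a)" by blast
  have aU: "ereal a < U" using t(1,2) by (meson ereal_less_eq(3) order_le_less_trans)
  show "ereal a < U \<and> a < s \<and> (0 \<le> Y \<or> (0 < \<beta> \<and> a - Y / \<beta> < s \<and> ereal (a - Y / \<beta>) < U))"
  proof (cases "0 \<le> Y")
    case False
    then have "0 < \<beta> * (t - a)" using t(4) by linarith
    then have \<beta>: "0 < \<beta>" using t(1) by (simp add: zero_less_mult_iff)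
    have "- Y / \<beta> \<le> t - a" using t(4) \<beta> by (simp add: field_simps)
    then have "a - Y / \<beta> \<le> t" by simp
    moreover from this have "ereal (a - Y / \<beta>) < U"
      using t(2) by (meson ereal_less_eq(3) order_le_less_trans)
    ultimately show ?thesis using aU t \<beta> by auto
  qed (use aU t in auto)
next
  assume A: "ereal a < U \<and> a < s \<and> (0 \<le> Y \<or> (0 < \<beta> \<and> a - Y / \<beta> < s \<and> ereal (a - Y / \<beta>) < U))"
  show "\<exists>t. a \<le> t \<and> ereal t < U \<and> t < s \<and> 0 \<le> Y + \<beta> * (t - a)"
  proof (cases "0 \<le> Y")
    case False
    with A have \<beta>: "0 < \<beta>" "a - Y / \<beta> < s" "ereal (a - Y / \<beta>) < U" by auto
    have "a \<le> a - Y / \<beta>" using False \<beta> by (simp add: divide_nonpos_pos)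
    then show ?thesis using \<beta> by (intro exI[of _ "a - Y / \<beta>"]) auto
  qed (use A in \<open>intro exI[of _ a], auto\<close>)
qed

context
  fixes n :: nat and v :: "nat \<Rightarrow> real" and a :: "nat \<Rightarrow> nat \<Rightarrow> real \<Rightarrow> real"
    and x0 :: nat and y0 :: real and e :: "nat \<Rightarrow> nat \<Rightarrow> real"
begin

abbreviation "jump_time k \<equiv> fst (jump_chain n v a x0 y0 e k)"
abbreviation "jump_state k \<equiv> fst (snd (jump_chain n v a x0 y0 e k))"
abbreviation "jump_memory k \<equiv> snd (snd (jump_chain n v a x0 y0 e k))"

lemma jump_time_Suc_mono: "jump_time k \<le> jump_time (Suc k)"
proof -
  have "jump_time k \<le> jump_time k + hold_time n v a (jump_state k) (jump_memory k) (\<lambda>j. e j k)"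
    using hold_time_nonneg by (simp add: add_increasing2)
  then show ?thesis unfolding jump_chain_Suc_let[of n v a x0 y0 e k] Let_def by auto
qed

lemma jump_time_mono: "k \<le> k' \<Longrightarrow> jump_time k \<le> jump_time k'"
  by (rule lift_Suc_mono_le[of jump_time]) (use jump_time_Suc_mono in auto)

lemma jump_time_nonneg: "0 \<le> jump_time k"
  using jump_time_mono[of 0 k] by simp

lemma jump_chain_step:
  assumes "jump_time (Suc k) \<noteq> \<infinity>"
  shows "\<exists>h. jump_time (Suc k) = jump_time k + ereal h \<and>
             jump_memory (Suc k) = jump_memory k + v (jump_state k) * h"
proof -
  define H where "H = hold_time n v a (jump_state k) (jump_memory k) (\<lambda>j. e j k)"
  have step: "jump_chain n v a x0 y0 e (Suc k) =
     (if jump_time k = \<infinity> \<or> H = \<infinity> then (\<infinity>, jump_state k, jump_memory k)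
      else (jump_time k + H, next_level n v a (jump_state k) (jump_memory k) (\<lambda>j. e j k),
            jump_memory k + v (jump_state k) * real_of_ereal H))"
    unfolding jump_chain_Suc_let[of n v a x0 y0 e k] Let_def H_def by simp
  then have "H \<noteq> \<infinity>" using assms by (auto split: if_splits)
  moreover have "0 \<le> H" unfolding H_def by (rule hold_time_nonneg)
  ultimately have "H = ereal (real_of_ereal H)" by (cases H) auto
  with step assms show ?thesis by (intro exI[of _ "real_of_ereal H"]) (auto split: if_splits)
qed

lemma interval_index_eq:
  assumes "jump_time k \<le> ereal t" "ereal t < jump_time (Suc k)"
  shows "interval_index n v a x0 y0 e t = k"
  unfolding interval_index_def
proof (rule Least_equality)
  fix k' assume "ereal t < jump_time (Suc k')"
  then show "k \<le> k'" using jump_time_mono[of "Suc k'" k] assms(1) by (cases "k \<le> k'") auto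
qed (fact assms(2))

lemma interval_or_beyond:
  assumes "0 \<le> t"
  shows "(\<exists>k. jump_time k \<le> ereal t \<and> ereal t < jump_time (Suc k)) \<or> (\<forall>k. jump_time (Suc k) \<le> ereal t)"
proof (cases "\<exists>k. ereal t < jump_time (Suc k)")
  case True
  define k0 where "k0 = (LEAST k. ereal t < jump_time (Suc k))"
  have k0: "ereal t < jump_time (Suc k0)" unfolding k0_def using True by (metis LeastI)
  have "jump_time k0 \<le> ereal t"
  proof (cases k0)
    case (Suc k1)
    then show ?thesis using k0_def not_less_Least[of k1 "\<lambda>k. ereal t < jump_time (Suc k)"] by simp
  qed (use assms in simp)
  then show ?thesis using k0 by blast
qed (auto simp: not_less)

lemma proc_on_interval:
  assumes "jump_time k \<le> ereal t" "ereal t < jump_time (Suc k)"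
  shows "proc_L n v a x0 y0 e t = jump_memory k + v (jump_state k) * (t - real_of_ereal (jump_time k))"
    and "proc_X n v a x0 y0 e t = jump_state k"
  unfolding proc_L_def proc_X_def interval_index_eq[OF assms]
  by (cases "jump_chain n v a x0 y0 e k"; simp)+

text \<open>Past the explosion time every jump time lies below \<open>t\<close>, and \<open>interval_index\<close> returns the
  unspecified index \<open>LEAST k. False\<close>; the process is then the affine continuation of that chain entry.\<close>

lemma proc_beyond:
  assumes "\<forall>k. jump_time (Suc k) \<le> ereal t"
  defines "c \<equiv> LEAST k::nat. False"
  shows "proc_L n v a x0 y0 e t = jump_memory c + v (jump_state c) * (t - real_of_ereal (jump_time c))"
  using assms unfolding proc_L_def interval_index_def c_def
  by (cases "jump_chain n v a x0 y0 e c") (simp add: not_less[symmetric] c_def)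

definition explosion_time :: ereal where
  "explosion_time = (SUP k. jump_time (Suc k))"

text \<open>A quantifier-free form of ``the affine memory \<open>Y + \<beta> (t - T)\<close> is nonnegative at some
  \<open>t \<in> [T, U)\<close> with \<open>t < s\<close>'' (see \<open>affine_nonneg_before_iff\<close>), which makes it measurable.\<close>

definition memory_nonneg_before :: "ereal \<Rightarrow> ereal \<Rightarrow> real \<Rightarrow> real \<Rightarrow> real \<Rightarrow> bool" where
  "memory_nonneg_before T U Y \<beta> s \<longleftrightarrow>
     T \<noteq> \<infinity> \<and> ereal (real_of_ereal T) < U \<and> real_of_ereal T < s \<and>
     (0 \<le> Y \<or> (0 < \<beta> \<and> real_of_ereal T - Y / \<beta> < s \<and> ereal (real_of_ereal T - Y / \<beta>) < U))"

definition memory_nonneg_after_explosion :: "real \<Rightarrow> bool" where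
  "memory_nonneg_after_explosion s \<longleftrightarrow>
     (let c = LEAST k::nat. False in
      memory_nonneg_before explosion_time \<infinity>
        (jump_memory c + v (jump_state c) * (real_of_ereal explosion_time - real_of_ereal (jump_time c)))
        (v (jump_state c)) s)"

lemma memory_nonneg_on_interval_iff:
  "(\<exists>t. jump_time k \<le> ereal t \<and> ereal t < jump_time (Suc k) \<and> t < s \<and> 0 \<le> proc_L n v a x0 y0 e t) \<longleftrightarrow>
   memory_nonneg_before (jump_time k) (jump_time (Suc k)) (jump_memory k) (v (jump_state k)) s"
proof (cases "jump_time k")
  case (real A)
  have "jump_time k \<le> ereal t \<and> ereal t < jump_time (Suc k) \<and> t < s \<and> 0 \<le> proc_L n v a x0 y0 e t \<longleftrightarrow>
        A \<le> t \<and> ereal t < jump_time (Suc k) \<and> t < s \<and> 0 \<le> jump_memory k + v (jump_state k) * (t - A)" for t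
    using proc_on_interval(1)[of k t] real by auto
  then have "(\<exists>t. jump_time k \<le> ereal t \<and> ereal t < jump_time (Suc k) \<and> t < s \<and> 0 \<le> proc_L n v a x0 y0 e t) \<longleftrightarrow>
        (\<exists>t. A \<le> t \<and> ereal t < jump_time (Suc k) \<and> t < s \<and> 0 \<le> jump_memory k + v (jump_state k) * (t - A))"
    by blast
  also have "\<dots> \<longleftrightarrow> memory_nonneg_before (jump_time k) (jump_time (Suc k)) (jump_memory k) (v (jump_state k)) s"
    unfolding affine_nonneg_before_iff memory_nonneg_before_def using real by simp
  finally show ?thesis .
qed (use jump_time_nonneg[of k] in \<open>auto simp: memory_nonneg_before_def\<close>)

lemma memory_nonneg_beyond_iff:
  "(\<exists>t. (\<forall>k. jump_time (Suc k) \<le> ereal t) \<and> t < s \<and> 0 \<le> proc_L n v a x0 y0 e t) \<longleftrightarrow>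
   memory_nonneg_after_explosion s"
proof -
  define c where "c = (LEAST k::nat. False)"
  have beyond: "(\<forall>k. jump_time (Suc k) \<le> ereal t) \<longleftrightarrow> explosion_time \<le> ereal t" for t
    unfolding explosion_time_def by (simp add: SUP_le_iff)
  have "0 \<le> jump_time (Suc 0)" by (rule jump_time_nonneg)
  also have "\<dots> \<le> explosion_time"
    unfolding explosion_time_def by (rule SUP_upper) simp
  finally have "0 \<le> explosion_time" .
  then show ?thesis
  proof (cases "explosion_time")
    case (real A)
    have "(\<forall>k. jump_time (Suc k) \<le> ereal t) \<and> t < s \<and> 0 \<le> proc_L n v a x0 y0 e t \<longleftrightarrow>
          A \<le> t \<and> ereal t < \<infinity> \<and> t < s \<and>
          0 \<le> (jump_memory c + v (jump_state c) * (A - real_of_ereal (jump_time c))) + v (jump_state c) * (t - A)" for t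
      using beyond[of t] proc_beyond[of t] real unfolding c_def
      by (auto simp: algebra_simps)
    then have "(\<exists>t. (\<forall>k. jump_time (Suc k) \<le> ereal t) \<and> t < s \<and> 0 \<le> proc_L n v a x0 y0 e t) \<longleftrightarrow>
          (\<exists>t. A \<le> t \<and> ereal t < \<infinity> \<and> t < s \<and>
             0 \<le> (jump_memory c + v (jump_state c) * (A - real_of_ereal (jump_time c))) + v (jump_state c) * (t - A))"
      by blast
    also have "\<dots> \<longleftrightarrow> memory_nonneg_after_explosion s"
      unfolding affine_nonneg_before_iff memory_nonneg_after_explosion_def memory_nonneg_before_def
        c_def[symmetric] Let_def using real by simp
    finally show ?thesis .
  qed (use beyond in \<open>auto simp: memory_nonneg_after_explosion_def memory_nonneg_before_def\<close>)
qed

lemma memory_nonneg_before_iff: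
  "(\<exists>t. 0 \<le> t \<and> 0 \<le> proc_L n v a x0 y0 e t \<and> t < s) \<longleftrightarrow>
   (\<exists>k. memory_nonneg_before (jump_time k) (jump_time (Suc k)) (jump_memory k) (v (jump_state k)) s) \<or>
   memory_nonneg_after_explosion s"
proof -
  have "(\<exists>t. 0 \<le> t \<and> 0 \<le> proc_L n v a x0 y0 e t \<and> t < s) \<longleftrightarrow>
        (\<exists>k t. jump_time k \<le> ereal t \<and> ereal t < jump_time (Suc k) \<and> t < s \<and> 0 \<le> proc_L n v a x0 y0 e t) \<or>
        (\<exists>t. (\<forall>k. jump_time (Suc k) \<le> ereal t) \<and> t < s \<and> 0 \<le> proc_L n v a x0 y0 e t)"
  proof
    assume "\<exists>t. 0 \<le> t \<and> 0 \<le> proc_L n v a x0 y0 e t \<and> t < s"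
    then obtain t where "0 \<le> t" "0 \<le> proc_L n v a x0 y0 e t" "t < s" by blast
    with interval_or_beyond[OF \<open>0 \<le> t\<close>] show "(\<exists>k t. jump_time k \<le> ereal t \<and> ereal t < jump_time (Suc k) \<and> t < s \<and> 0 \<le> proc_L n v a x0 y0 e t) \<or>
        (\<exists>t. (\<forall>k. jump_time (Suc k) \<le> ereal t) \<and> t < s \<and> 0 \<le> proc_L n v a x0 y0 e t)" by blast
  next
    have "0 \<le> t" if "jump_time k \<le> ereal t" for k t
    proof -
      have "0 \<le> ereal t" using jump_time_nonneg[of k] that by (rule order_trans)
      then show ?thesis by simp
    qed
    then show "(\<exists>k t. jump_time k \<le> ereal t \<and> ereal t < jump_time (Suc k) \<and> t < s \<and> 0 \<le> proc_L n v a x0 y0 e t) \<or>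
        (\<exists>t. (\<forall>k. jump_time (Suc k) \<le> ereal t) \<and> t < s \<and> 0 \<le> proc_L n v a x0 y0 e t) \<Longrightarrow> \<exists>t. 0 \<le> t \<and> 0 \<le> proc_L n v a x0 y0 e t \<and> t < s"
      by blast
  qed
  then show ?thesis by (simp only: memory_nonneg_on_interval_iff memory_nonneg_beyond_iff)
qed

end

context
  fixes M :: "'a measure" and E :: "nat \<Rightarrow> nat \<Rightarrow> 'a \<Rightarrow> real"
    and n N0 N1 :: nat and v :: "nat \<Rightarrow> real" and x0 :: nat and y0 :: real
  assumes memory: "noiseless_memory n N0 N1 v"
    and E: "\<And>j k. j \<le> n \<Longrightarrow> (\<lambda>\<omega>. E j k \<omega>) \<in> borel_measurable M"
begin

lemma measurable_memory_nonneg_before: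
  "Measurable.pred M (\<lambda>\<omega>. \<exists>t. 0 \<le> t \<and>
     0 \<le> proc_L n v (noiseless_rate n N0 N1 v) x0 y0 (\<lambda>j k. E j k \<omega>) t \<and> t < s)"
proof -
  let ?a = "noiseless_rate n N0 N1 v"
  note chain = measurable_jump_chain_noiseless[where E=E, OF memory E]
  have [measurable]: "(\<lambda>\<omega>. jump_time n v ?a x0 y0 (\<lambda>j k. E j k \<omega>) k) \<in> borel_measurable M"
    "(\<lambda>\<omega>. jump_state n v ?a x0 y0 (\<lambda>j k. E j k \<omega>) k) \<in> measurable M (count_space UNIV)"
    "(\<lambda>\<omega>. jump_memory n v ?a x0 y0 (\<lambda>j k. E j k \<omega>) k) \<in> borel_measurable M" for k
    using chain by blast+
  have [measurable]: "(\<lambda>\<omega>. v (jump_state n v ?a x0 y0 (\<lambda>j k. E j k \<omega>) k)) \<in> borel_measurable M" for k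
    by (rule measurable_compose_countable[where g="\<lambda>\<omega>. jump_state n v ?a x0 y0 (\<lambda>j k. E j k \<omega>) k"]) auto
  have [measurable]: "(\<lambda>\<omega>. explosion_time n v ?a x0 y0 (\<lambda>j k. E j k \<omega>)) \<in> borel_measurable M"
    unfolding explosion_time_def by measurable
  show ?thesis
    unfolding memory_nonneg_before_iff memory_nonneg_after_explosion_def memory_nonneg_before_def Let_def
    by measurable
qed

lemma sets_reversal_at:
  "{\<omega>\<in>space M. reversal_at n v (noiseless_rate n N0 N1 v) x0 y0 (\<lambda>j k. E j k \<omega>) j} \<in> sets M"
proof -
  let ?L = "\<lambda>\<omega>. proc_L n v (noiseless_rate n N0 N1 v) x0 y0 (\<lambda>j k. E j k \<omega>)"
  define before where "before \<omega> s \<longleftrightarrow> (\<exists>t. 0 \<le> t \<and> 0 \<le> ?L \<omega> t \<and> t < s)" for \<omega> s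
  have [measurable]: "Measurable.pred M (\<lambda>\<omega>. before \<omega> s)" for s
    unfolding before_def by (rule measurable_memory_nonneg_before)
  define hits where "hits \<omega> \<longleftrightarrow> (\<exists>t\<ge>0. 0 \<le> ?L \<omega> t)" for \<omega>
  have hits_iff: "hits \<omega> \<longleftrightarrow> (\<exists>N::nat. before \<omega> (real N))" for \<omega>
    unfolding hits_def before_def by (meson reals_Archimedean2)
  have [measurable]: "Measurable.pred M hits" unfolding hits_iff[abs_def] by measurable
  define \<tau> where "\<tau> \<omega> = Inf {t. 0 \<le> t \<and> 0 \<le> ?L \<omega> t}" for \<omega>
  have [measurable]: "\<tau> \<in> borel_measurable M"
  proof (rule borel_measurableI_less)
    fix s
    have "\<tau> \<omega> < s \<longleftrightarrow> (hits \<omega> \<and> before \<omega> s) \<or> (\<not> hits \<omega> \<and> Inf ({}::real set) < s)" for \<omega>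
    proof (cases "hits \<omega>")
      case True
      then have "{t. 0 \<le> t \<and> 0 \<le> ?L \<omega> t} \<noteq> {}" unfolding hits_def by auto
      moreover have "bdd_below {t. 0 \<le> t \<and> 0 \<le> ?L \<omega> t}" by (rule bdd_belowI[of _ 0]) auto
      ultimately show ?thesis using True unfolding \<tau>_def before_def by (auto simp: cInf_less_iff)
    next
      case False
      then have empty: "{t. 0 \<le> t \<and> 0 \<le> ?L \<omega> t} = {}" unfolding hits_def by auto
      show ?thesis using False unfolding \<tau>_def empty by simp
    qed
    then have "{\<omega>\<in>space M. \<tau> \<omega> < s} = {\<omega>\<in>space M. (hits \<omega> \<and> before \<omega> s) \<or> (\<not> hits \<omega> \<and> Inf ({}::real set) < s)}"
      by auto
    also have "\<dots> \<in> sets M" by measurable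
    finally show "{\<omega>\<in>space M. \<tau> \<omega> < s} \<in> sets M" .
  qed
  let ?a = "noiseless_rate n N0 N1 v"
  have [measurable]: "(\<lambda>\<omega>. jump_time n v ?a x0 y0 (\<lambda>j k. E j k \<omega>) k) \<in> borel_measurable M"
    "(\<lambda>\<omega>. jump_state n v ?a x0 y0 (\<lambda>j k. E j k \<omega>) k) \<in> measurable M (count_space UNIV)" for k
    using measurable_jump_chain_noiseless[where E=E, OF memory E] by blast+
  define idx where "idx \<omega> = interval_index n v ?a x0 y0 (\<lambda>j k. E j k \<omega>) (\<tau> \<omega>)" for \<omega>
  have [measurable]: "idx \<in> measurable M (count_space UNIV)"
    unfolding idx_def interval_index_def by measurable
  have [measurable]: "(\<lambda>\<omega>. jump_state n v ?a x0 y0 (\<lambda>j k. E j k \<omega>) (idx \<omega>)) \<in> measurable M (count_space UNIV)"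
    by (rule measurable_compose_countable[of "\<lambda>k \<omega>. jump_state n v ?a x0 y0 (\<lambda>j k. E j k \<omega>) k"]) auto
  have event: "{\<omega>\<in>space M. reversal_at n v ?a x0 y0 (\<lambda>j k. E j k \<omega>) j} =
      {\<omega>\<in>space M. hits \<omega> \<and> jump_state n v ?a x0 y0 (\<lambda>j k. E j k \<omega>) (idx \<omega>) = j}"
    unfolding reversal_at_def hits_def idx_def \<tau>_def proc_X_def by simp
  show ?thesis unfolding event by measurable
qed

end

section \<open>The descent of the noiseless model\<close>

locale noiseless_model =
  fixes n N0 N1 :: nat and v :: "nat \<Rightarrow> real"
  assumes memory: "noiseless_memory n N0 N1 v" and N0_pos: "1 \<le> N0"
begin

abbreviation "rate \<equiv> noiseless_rate n N0 N1 v"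
abbreviation "\<mu> \<equiv> mu n N0 N1 v"

lemma N0_bound: "2 * N0 < n"
  using memory by (simp add: noiseless_memory_def)

lemma v_pos: "x \<le> N0 \<Longrightarrow> 0 < v x"
  using memory by (simp add: noiseless_memory_def)

lemma cc_pos: "x \<le> N0 \<Longrightarrow> 0 < cc n N0 N1 v x"
  using sum_pos[of "{0..x}" v] v_pos by (simp add: cc_def)

lemma mu_pos: "i < N0 \<Longrightarrow> 0 < \<mu> i"
  unfolding mu_def using v_pos[of "i + 1"] cc_pos[of i] by simp

lemma mu_strict_antimono:
  assumes F': "condF' N0 v" and "i < i'" "i' < N0"
  shows "\<mu> i' < \<mu> i"
proof -
  have v_antimono: "v i' \<le> v i" if "i \<le> i'" "i' \<le> N0" for i i'
    using that
  proof (induction i' rule: dec_induct)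
    case (step k)
    then have "v (k + 1) \<le> v k" using F' by (simp add: condF'_def)
    then show ?case using step by simp
  qed simp
  have "{0..i'} = {0..i} \<union> {Suc i..i'}" using assms by auto
  then have "cc n N0 N1 v i' = sum v {0..i} + sum v {Suc i..i'}"
    using assms by (simp add: cc_def sum.union_disjoint)
  moreover have "0 < sum v {Suc i..i'}" by (rule sum_pos) (use assms v_pos in auto)
  ultimately have "cc n N0 N1 v i < cc n N0 N1 v i'" using assms by (simp add: cc_def)
  then have "v (i' + 1) / cc n N0 N1 v i' < v (i' + 1) / cc n N0 N1 v i"
    using cc_pos[of i] v_pos[of "i' + 1"] assms by (simp add: divide_strict_left_mono)
  also have "\<dots> \<le> v (i + 1) / cc n N0 N1 v i"
    using cc_pos[of i] v_antimono[of "i + 1" "i' + 1"] assms by (simp add: divide_right_mono)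
  finally show ?thesis by (simp add: mu_def)
qed

lemma mu_inj_on:
  assumes "condF2 n N0 N1 v \<or> condF' N0 v"
  shows "inj_on \<mu> {0..<N0}"
  using assms
proof
  assume "condF' N0 v"
  then show ?thesis
    by (intro inj_onI) (metis atLeastLessThan_iff linorder_neqE_nat mu_strict_antimono order_less_irrefl)
qed (simp add: condF2_def)

lemma clock_time_up:
  assumes "x \<le> N0" "y \<le> 0" "0 < s"
  shows "clock_time v rate x y (x + 1) s = ereal ((sqrt (2 * s * v x / cc n N0 N1 v x) - y) / v x)"
proof -
  have "jump_coeff n N0 N1 v x (x + 1) = cc n N0 N1 v x" "jump_sign n x (x + 1) = 1"
    using assms N0_bound by (auto simp: jump_coeff_def jump_sign_def)
  then show ?thesis
    unfolding clock_time_noiseless using ramp_clock_rising[OF cc_pos v_pos] assms by simp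
qed

lemma clock_time_down:
  assumes "x \<le> N0" "1 \<le> x"
  shows "clock_time v rate x y (x - 1) s = ramp_clock (cc n N0 N1 v (x - 1)) (- y) (- v x) s"
proof -
  have "jump_coeff n N0 N1 v x (x - 1) = cc n N0 N1 v (x - 1)" "jump_sign n x (x - 1) = -1"
    using assms N0_bound by (auto simp: jump_coeff_def jump_sign_def)
  then show ?thesis unfolding clock_time_noiseless by simp
qed

lemma clock_time_other:
  assumes "j \<noteq> x + 1" "j + 1 \<noteq> x" "0 < s"
  shows "clock_time v rate x y j s = \<infinity>"
proof -
  have "jump_coeff n N0 N1 v x j = 0" using assms by (auto simp: jump_coeff_def)
  then show ?thesis unfolding clock_time_noiseless using ramp_clock_zero_coeff[OF assms(3)] by simp
qed

text \<open>At a level \<open>x \<in> [1, N0]\<close> with memory \<open>y < 0\<close> the downward clock rings first whenever it rings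
  at all, and it rings iff \<open>\<mu>\<^sub>x\<^sub>-\<^sub>1 e\<^sub>x\<^sub>-\<^sub>1 \<le> y\<^sup>2/2\<close>; the half-square of the memory then
  drops by exactly \<open>\<mu>\<^sub>x\<^sub>-\<^sub>1 e\<^sub>x\<^sub>-\<^sub>1\<close>.\<close>

lemma hold_time_down:
  assumes x: "x \<le> N0" "1 \<le> x" and y: "y < 0" and s: "\<And>j. j \<le> n \<Longrightarrow> 0 < s j"
    and le: "s (x - 1) * \<mu> (x - 1) \<le> y\<^sup>2 / 2"
  defines "h \<equiv> (- y - sqrt (y\<^sup>2 - 2 * (s (x - 1) * \<mu> (x - 1)))) / v x"
  shows "hold_time n v rate x y s = ereal h" "next_level n v rate x y s = x - 1"
    "y + v x * h = - sqrt (y\<^sup>2 - 2 * (s (x - 1) * \<mu> (x - 1)))"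
proof -
  have xn: "x + 1 \<le> n" using x N0_bound by simp
  have v: "0 < v x" using v_pos x by simp
  have \<mu>: "s (x - 1) * v x / cc n N0 N1 v (x - 1) = s (x - 1) * \<mu> (x - 1)"
    using x by (simp add: mu_def)
  have down: "clock_time v rate x y (x - 1) (s (x - 1)) = ereal h"
    unfolding clock_time_down[OF x] h_def \<mu>[symmetric]
    by (rule ramp_clock_falling) (use x y s xn le \<mu> cc_pos v in auto)
  have "h \<le> - y / v x"
    using v le unfolding h_def by (simp add: diff_divide_distrib)
  also have "\<dots> \<le> (sqrt (2 * s (x + 1) * v x / cc n N0 N1 v x) - y) / v x"
    using v s[OF xn] cc_pos[OF x(1)] by (simp add: diff_divide_distrib)
  finally have "ereal h \<le> clock_time v rate x y (x + 1) (s (x + 1))"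
    using clock_time_up[OF x(1) _ s[OF xn]] y by simp
  moreover have other: "clock_time v rate x y j (s j) = \<infinity>" if "j \<noteq> x + 1" "j \<noteq> x - 1" "j \<le> n" for j
    by (rule clock_time_other) (use that x s in auto)
  ultimately have all: "ereal h \<le> clock_time v rate x y j (s j)" if "j \<le> n" for j
    using down that by (cases "j = x + 1"; cases "j = x - 1") auto
  show hold: "hold_time n v rate x y s = ereal h"
    unfolding hold_time_def
    by (rule Min_eqI) (use all down x N0_bound in \<open>auto intro!: image_eqI[of _ _ "x - 1"]\<close>)
  show "next_level n v rate x y s = x - 1"
    unfolding next_level_def hold
  proof (rule Least_equality)
    fix j assume "j \<le> n \<and> clock_time v rate x y j (s j) = ereal h"
    then show "x - 1 \<le> j" using other[of j] by (cases "j = x + 1"; cases "j = x - 1") auto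
  qed (use down x N0_bound in simp)
  show "y + v x * h = - sqrt (y\<^sup>2 - 2 * (s (x - 1) * \<mu> (x - 1)))"
    unfolding h_def using v by (simp add: field_simps)
qed

text \<open>\<open>- y / v x\<close> is the time at which the memory reaches 0, so the memory turns nonnegative
  before the next jump.\<close>

lemma hold_time_last:
  assumes x: "x \<le> N0" and y: "y \<le> 0" and s: "\<And>j. j \<le> n \<Longrightarrow> 0 < s j"
    and no_down: "x = 0 \<or> y\<^sup>2 / 2 < s (x - 1) * \<mu> (x - 1)"
  shows "\<exists>h. hold_time n v rate x y s = ereal h \<and> - y / v x < h"
proof -
  have xn: "x + 1 \<le> n" using x N0_bound by simp
  have v: "0 < v x" using v_pos x by simp
  define h where "h = (sqrt (2 * s (x + 1) * v x / cc n N0 N1 v x) - y) / v x"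
  have up: "clock_time v rate x y (x + 1) (s (x + 1)) = ereal h"
    unfolding h_def by (rule clock_time_up) (use x y s xn in auto)
  have "0 < sqrt (2 * s (x + 1) * v x / cc n N0 N1 v x) / v x"
    using s[OF xn] v cc_pos[OF x] by simp
  then have h: "- y / v x < h" unfolding h_def by (simp add: diff_divide_distrib)
  have down: "clock_time v rate x y (x - 1) (s (x - 1)) = \<infinity>" if "1 \<le> x"
  proof -
    have "y\<^sup>2 / 2 < s (x - 1) * v x / cc n N0 N1 v (x - 1)"
      using no_down that by (simp add: mu_def)
    then show ?thesis
      unfolding clock_time_down[OF x that]
      by (rule ramp_clock_falling_infinity[rotated 3]) (use cc_pos x v s xn in auto)
  qed
  have other: "clock_time v rate x y j (s j) = \<infinity>" if "j \<noteq> x + 1" "j + 1 \<noteq> x" "j \<le> n" for j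
    by (rule clock_time_other) (use s that in auto)
  have "ereal h \<le> clock_time v rate x y j (s j)" if "j \<le> n" for j
    using up down other[OF _ _ that] by (cases "j = x + 1"; cases "j + 1 = x") auto
  then have "hold_time n v rate x y s = ereal h"
    unfolding hold_time_def by (intro Min_eqI) (use up xn in \<open>auto intro!: image_eqI[of _ _ "x + 1"]\<close>)
  then show ?thesis using h by blast
qed

text \<open>The \<open>i\<close>-th jump of the descent goes from level \<open>N0 - i\<close> to \<open>N0 - 1 - i\<close> and consumes
  \<open>\<mu>\<^sub>N\<^sub>0\<^sub>-\<^sub>1\<^sub>-\<^sub>i e\<^sub>N\<^sub>0\<^sub>-\<^sub>1\<^sub>-\<^sub>i\<^sub>,\<^sub>i\<close> of the budget \<open>l\<^sup>2/2\<close>.\<close>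

definition descent_cost :: "(nat \<Rightarrow> nat \<Rightarrow> real) \<Rightarrow> nat \<Rightarrow> real" where
  "descent_cost e m = (\<Sum>i<m. \<mu> (N0 - 1 - i) * e (N0 - 1 - i) i)"

end

locale noiseless_path = noiseless_model +
  fixes l :: real and e :: "nat \<Rightarrow> nat \<Rightarrow> real"
  assumes l_neg: "l < 0" and clocks_pos: "\<And>j k. j \<le> n \<Longrightarrow> 0 < e j k"
begin

abbreviation "cost \<equiv> descent_cost e"
abbreviation "chain_time k \<equiv> jump_time n v rate N0 l e k"
abbreviation "chain_level k \<equiv> jump_state n v rate N0 l e k"
abbreviation "chain_memory k \<equiv> jump_memory n v rate N0 l e k"
abbreviation "path_memory \<equiv> proc_L n v rate N0 l e"

lemma descent_cost_Suc: "cost (Suc m) = cost m + \<mu> (N0 - 1 - m) * e (N0 - 1 - m) m"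
  by (simp add: descent_cost_def)

lemma descent_step_pos: "m < N0 \<Longrightarrow> 0 < \<mu> (N0 - 1 - m) * e (N0 - 1 - m) m"
  using mu_pos[of "N0 - 1 - m"] clocks_pos[of "N0 - 1 - m" m] N0_bound by simp

lemma descent_cost_mono: "k \<le> m \<Longrightarrow> m \<le> N0 \<Longrightarrow> cost k \<le> cost m"
proof (induction m rule: dec_induct)
  case (step m)
  then show ?case using descent_step_pos[of m] by (simp add: descent_cost_Suc)
qed simp

lemma chain_descent:
  "m \<le> N0 \<Longrightarrow> cost m \<le> l\<^sup>2 / 2 \<Longrightarrow>
   chain_time m \<noteq> \<infinity> \<and> chain_level m = N0 - m \<and> chain_memory m = - sqrt (2 * (l\<^sup>2 / 2 - cost m))"
proof (induction m)
  case 0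
  then show ?case using l_neg by (simp add: descent_cost_def)
next
  case (Suc m)
  have "cost m < cost (Suc m)" using descent_step_pos[of m] Suc.prems by (simp add: descent_cost_Suc)
  then have IH: "chain_time m \<noteq> \<infinity>" "chain_level m = N0 - m"
      "chain_memory m = - sqrt (2 * (l\<^sup>2 / 2 - cost m))"
    using Suc.IH Suc.prems by auto
  define x where "x = N0 - m"
  define y where "y = - sqrt (2 * (l\<^sup>2 / 2 - cost m))"
  have x: "x \<le> N0" "1 \<le> x" "x - 1 = N0 - 1 - m" using Suc.prems unfolding x_def by auto
  have y: "y < 0" "y\<^sup>2 / 2 = l\<^sup>2 / 2 - cost m"
    unfolding y_def using \<open>cost m < cost (Suc m)\<close> Suc.prems by auto
  have le: "e (x - 1) m * \<mu> (x - 1) \<le> y\<^sup>2 / 2"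
    using Suc.prems unfolding y(2) x(3) by (simp add: descent_cost_Suc mult.commute)
  define h where "h = (- y - sqrt (y\<^sup>2 - 2 * (e (x - 1) m * \<mu> (x - 1)))) / v x"
  note down = hold_time_down[where s="\<lambda>j. e j m", OF x(1,2) y(1) clocks_pos le, folded h_def]
  have "jump_chain n v rate N0 l e (Suc m) =
      (chain_time m + ereal h, x - 1, - sqrt (y\<^sup>2 - 2 * (e (x - 1) m * \<mu> (x - 1))))"
    unfolding jump_chain_Suc_let[of n v rate N0 l e m] Let_def IH(2,3)[folded x_def y_def]
    using IH(1) down by simp
  moreover have "y\<^sup>2 - 2 * (e (x - 1) m * \<mu> (x - 1)) = 2 * (l\<^sup>2 / 2 - cost (Suc m))"
  proof -
    have "y\<^sup>2 = l\<^sup>2 - 2 * cost m" using y(2) by linarith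
    then show ?thesis unfolding x(3) by (simp add: descent_cost_Suc algebra_simps)
  qed
  ultimately show ?case using IH(1) x(3) by simp
qed

lemma path_memory_neg_during_descent:
  assumes "k < m" "m \<le> N0" "cost m \<le> l\<^sup>2 / 2"
    and t: "chain_time k \<le> ereal t" "ereal t < chain_time (Suc k)"
  shows "path_memory t < 0"
proof -
  have cost: "cost (Suc k) \<le> l\<^sup>2 / 2" "cost k \<le> l\<^sup>2 / 2"
    using descent_cost_mono[of "Suc k" m] descent_cost_mono[of k m] assms by auto
  have k: "chain_time k \<noteq> \<infinity>" "chain_level k = N0 - k"
    "chain_memory (Suc k) = - sqrt (2 * (l\<^sup>2 / 2 - cost (Suc k)))" "chain_time (Suc k) \<noteq> \<infinity>"
    using chain_descent[of k] chain_descent[of "Suc k"] cost assms by auto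
  obtain h where h: "chain_time (Suc k) = chain_time k + ereal h"
      "chain_memory (Suc k) = chain_memory k + v (chain_level k) * h"
    using jump_chain_step[OF k(4)] by blast
  obtain A where A: "chain_time k = ereal A"
    using k(1) jump_time_nonneg[of n v rate N0 l e k] by (cases "chain_time k") auto
  have "0 < v (chain_level k)" using v_pos k(2) by simp
  moreover have "t < A + h" using t(2) h(1) A by simp
  ultimately have "path_memory t < chain_memory k + v (chain_level k) * h"
    using proc_on_interval(1)[OF t] A by (simp add: mult_strict_left_mono)
  also have "\<dots> = chain_memory (Suc k)" using h(2) by simp
  also have "\<dots> \<le> 0" using k(3) cost(1) by simp
  finally show ?thesis .
qed

lemma reversal_at_iff_stop:
  assumes m: "m \<le> N0" "cost m \<le> l\<^sup>2 / 2" "m = N0 \<or> l\<^sup>2 / 2 < cost (Suc m)"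
  shows "reversal_at n v rate N0 l e j \<longleftrightarrow> j = N0 - m"
proof -
  have chain: "chain_time m \<noteq> \<infinity>" "chain_level m = N0 - m" "chain_memory m = - sqrt (2 * (l\<^sup>2 / 2 - cost m))"
    using chain_descent[OF m(1,2)] by auto
  define x where "x = N0 - m"
  define y where "y = - sqrt (2 * (l\<^sup>2 / 2 - cost m))"
  have x: "x \<le> N0" and v: "0 < v x" using v_pos[of x] unfolding x_def by auto
  have y: "y \<le> 0" "y\<^sup>2 / 2 = l\<^sup>2 / 2 - cost m" unfolding y_def using m by auto
  have "x = 0 \<or> y\<^sup>2 / 2 < e (x - 1) m * \<mu> (x - 1)"
    using m unfolding y(2) x_def by (auto simp: descent_cost_Suc mult.commute)
  then obtain h where h: "hold_time n v rate x y (\<lambda>j. e j m) = ereal h" "- y / v x < h"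
    using hold_time_last[where s="\<lambda>j. e j m", OF x y(1) clocks_pos] by blast
  obtain A where A: "chain_time m = ereal A" "0 \<le> A"
    using chain(1) jump_time_nonneg[of n v rate N0 l e m] by (cases "chain_time m") auto
  have next_time: "chain_time (Suc m) = ereal (A + h)"
    unfolding jump_chain_Suc_let[of n v rate N0 l e m] Let_def
    using A h(1) chain(2,3) x_def y_def by simp
  define r where "r = A - y / v x"
  have "0 \<le> - y / v x" using y(1) v by (intro divide_nonneg_pos) auto
  then have r: "chain_time m \<le> ereal r" "ereal r < chain_time (Suc m)" "0 \<le> r"
    using A next_time h(2) unfolding r_def by auto
  have Lr: "path_memory r = 0" "proc_X n v rate N0 l e r = N0 - m"
    using proc_on_interval[OF r(1,2)] chain A v unfolding r_def x_def[symmetric] y_def[symmetric] by simp_all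
  have first: "r \<le> t" if "0 \<le> t" "0 \<le> path_memory t" for t
    using interval_or_beyond[OF that(1), of n v rate N0 l e]
  proof (elim disjE exE conjE)
    fix k assume k: "chain_time k \<le> ereal t" "ereal t < chain_time (Suc k)"
    show "r \<le> t"
    proof (cases k m rule: linorder_cases)
      case less
      then show ?thesis using path_memory_neg_during_descent[OF _ m(1,2) k] that(2) by simp
    next
      case equal
      then have "- y \<le> v x * (t - A)"
        using that(2) proc_on_interval(1)[OF k] chain A unfolding x_def y_def by simp
      then show ?thesis using v unfolding r_def by (simp add: field_simps)
    next
      case greater
      then have "chain_time (Suc m) \<le> chain_time k" by (intro jump_time_mono) simp
      then have "ereal (A + h) \<le> ereal t" using k(1) next_time by (metis order_trans)
      then show ?thesis using r h(2) A unfolding r_def by simp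
    qed
  next
    assume "\<forall>k. chain_time (Suc k) \<le> ereal t"
    then have "ereal (A + h) \<le> ereal t" using next_time by metis
    then show "r \<le> t" using h(2) unfolding r_def by simp
  qed
  have hitting_time: "Inf {t. 0 \<le> t \<and> 0 \<le> path_memory t} = r"
    by (rule cInf_eq_minimum) (use r(3) Lr(1) first in auto)
  show ?thesis unfolding reversal_at_def hitting_time Lr(2) using r(3) Lr(1) by auto
qed

lemma descent_stops: "\<exists>m\<le>N0. cost m \<le> l\<^sup>2 / 2 \<and> (m = N0 \<or> l\<^sup>2 / 2 < cost (Suc m))"
proof -
  define m where "m = (LEAST m. m = N0 \<or> l\<^sup>2 / 2 < cost (Suc m))"
  have stop: "m = N0 \<or> l\<^sup>2 / 2 < cost (Suc m)" unfolding m_def by (rule LeastI[of _ N0]) simp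
  have "m \<le> N0" unfolding m_def by (rule Least_le) simp
  moreover have "cost m \<le> l\<^sup>2 / 2"
  proof (cases m)
    case (Suc m')
    then show ?thesis
      using not_less_Least[of m' "\<lambda>m. m = N0 \<or> l\<^sup>2 / 2 < cost (Suc m)"] m_def by auto
  qed (simp add: descent_cost_def)
  ultimately show ?thesis using stop by blast
qed

lemma reversal_at_iff:
  "reversal_at n v rate N0 l e k \<longleftrightarrow>
   k \<le> N0 \<and> cost (N0 - k) \<le> l\<^sup>2 / 2 \<and> (N0 - k = N0 \<or> l\<^sup>2 / 2 < cost (Suc (N0 - k)))"
proof -
  obtain m where m: "m \<le> N0" "cost m \<le> l\<^sup>2 / 2" "m = N0 \<or> l\<^sup>2 / 2 < cost (Suc m)"
    using descent_stops by blast
  show ?thesis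
  proof
    assume "reversal_at n v rate N0 l e k"
    then have "k = N0 - m" using reversal_at_iff_stop[OF m] by blast
    then show "k \<le> N0 \<and> cost (N0 - k) \<le> l\<^sup>2 / 2 \<and> (N0 - k = N0 \<or> l\<^sup>2 / 2 < cost (Suc (N0 - k)))"
      using m by (simp add: diff_diff_cancel)
  next
    assume "k \<le> N0 \<and> cost (N0 - k) \<le> l\<^sup>2 / 2 \<and> (N0 - k = N0 \<or> l\<^sup>2 / 2 < cost (Suc (N0 - k)))"
    then show "reversal_at n v rate N0 l e k"
      using reversal_at_iff_stop[of "N0 - k" k] by simp
  qed
qed

end

lemma (in prob_space) indep_vars_reindex:
  assumes inj: "inj_on g I" and indep: "indep_vars M' X (g ` I)"
  shows "indep_vars (\<lambda>i. M' (g i)) (\<lambda>i. X (g i)) I"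
  unfolding indep_vars_def2 indep_sets_def
proof (intro conjI ballI allI impI)
  show "random_variable (M' (g i)) (X (g i))" if "i \<in> I" for i
    using indep that unfolding indep_vars_def2 by auto
  show "{X (g i) -` A \<inter> space M |A. A \<in> sets (M' (g i))} \<subseteq> events" if "i \<in> I" for i
    using indep that unfolding indep_vars_def2 indep_sets_def by auto
  fix J assume J: "J \<subseteq> I" "J \<noteq> {}" "finite J"
  fix A assume A: "A \<in> (\<Pi> j\<in>J. {X (g j) -` B \<inter> space M |B. B \<in> sets (M' (g j))})"
  have injJ: "inj_on g J" using inj J(1) by (rule inj_on_subset)
  define A' where "A' k = A (the_inv_into J g k)" for k
  have A'g: "A' (g j) = A j" if "j \<in> J" for j
    unfolding A'_def using the_inv_into_f_f[OF injJ that] by simp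
  have "prob (\<Inter>k\<in>g ` J. A' k) = (\<Prod>k\<in>g ` J. prob (A' k))"
  proof (rule indep_setsD)
    show "indep_sets (\<lambda>k. {X k -` B \<inter> space M |B. B \<in> sets (M' k)}) (g ` I)"
      using indep unfolding indep_vars_def2 by blast
    show "\<forall>k\<in>g ` J. A' k \<in> {X k -` B \<inter> space M |B. B \<in> sets (M' k)}"
      using A A'g by (auto simp: Pi_iff)
  qed (use J in auto)
  moreover have "(\<Inter>k\<in>g ` J. A' k) = (\<Inter>j\<in>J. A j)" using A'g by auto
  moreover have "(\<Prod>k\<in>g ` J. prob (A' k)) = (\<Prod>j\<in>J. prob (A j))"
    using A'g by (simp add: prod.reindex[OF injJ])
  ultimately show "prob (\<Inter>j\<in>J. A j) = (\<Prod>j\<in>J. prob (A j))" by simp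
qed

lemma pure_birth_prob_reversed_rates:
  fixes \<mu> :: "nat \<Rightarrow> real"
  assumes "m + k = N0" "1 \<le> k"
  shows "pure_birth_prob (\<lambda>i. 1 / \<mu> (N0 - 1 - i)) m x =
           (\<Prod>j=k..N0-1. 1 / \<mu> j) *
           (\<Sum>j=k-1..N0-1. exp (- x / \<mu> j) * (\<Prod>i\<in>{k-1..N0-1} - {j}. 1 / (1 / \<mu> i - 1 / \<mu> j)))"
proof -
  let ?r = "\<lambda>i. 1 / \<mu> (N0 - 1 - i)"
  have prod: "(\<Prod>i<m. ?r i) = (\<Prod>j=k..N0-1. 1 / \<mu> j)"
    by (rule prod.reindex_bij_witness[where i="\<lambda>b. N0 - 1 - b" and j="\<lambda>a. N0 - 1 - a"])
       (use assms in auto)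
  have coeff: "birth_coeff ?r m a = (\<Prod>i\<in>{k-1..N0-1} - {N0-1-a}. 1 / (1 / \<mu> i - 1 / \<mu> (N0-1-a)))"
    if "a \<le> m" for a
    unfolding birth_coeff_def
    by (rule prod.reindex_bij_witness[where i="\<lambda>b. N0 - 1 - b" and j="\<lambda>a. N0 - 1 - a"])
       (use assms that in auto)
  have "(\<Sum>j\<le>m. exp (- ?r j * x) * birth_coeff ?r m j) =
        (\<Sum>j=k-1..N0-1. exp (- x / \<mu> j) * (\<Prod>i\<in>{k-1..N0-1} - {j}. 1 / (1 / \<mu> i - 1 / \<mu> j)))"
    by (rule sum.reindex_bij_witness[where i="\<lambda>b. N0 - 1 - b" and j="\<lambda>a. N0 - 1 - a"])
       (use assms coeff in auto)
  then show ?thesis unfolding pure_birth_prob_def prod by simp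
qed

section \<open>Reversal probabilities\<close>

locale noiseless_reversal = noiseless_model n N0 N1 v + prob_space M
  for n N0 N1 :: nat and v :: "nat \<Rightarrow> real" and M :: "'a measure" +
  fixes E :: "nat \<Rightarrow> nat \<Rightarrow> 'a \<Rightarrow> real" and l :: real
  assumes indep_clocks: "indep_vars (\<lambda>_. borel) (\<lambda>(j, k). E j k) ({..n} \<times> UNIV)"
    and exponential_clocks: "\<And>j k. j \<le> n \<Longrightarrow> distributed M lborel (E j k) (exponential_density 1)"
    and mu_inj: "inj_on (mu n N0 N1 v) {0..<N0}"
    and l_neg: "l < 0"
begin

abbreviation "reversal_event j \<equiv> {\<omega> \<in> space M. reversal_at n v rate N0 l (\<lambda>j k. E j k \<omega>) j}"

lemma clock_measurable: "j \<le> n \<Longrightarrow> (\<lambda>\<omega>. E j k \<omega>) \<in> borel_measurable M"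
  using distributed_measurable[OF exponential_clocks] by simp

lemma reversal_event_sets: "reversal_event j \<in> events"
  using sets_reversal_at[where E=E, OF memory clock_measurable] .

lemma clocks_pos_AE: "AE \<omega> in M. \<forall>j\<le>n. \<forall>k. 0 < E j k \<omega>"
  using AE_exponential_pos[OF exponential_clocks] by (simp add: AE_all_countable)

lemma reversal_at_iff_AE:
  "AE \<omega> in M. \<forall>k. reversal_at n v rate N0 l (\<lambda>j k. E j k \<omega>) k \<longleftrightarrow>
     k \<le> N0 \<and> descent_cost (\<lambda>j k. E j k \<omega>) (N0 - k) \<le> l\<^sup>2 / 2 \<and>
     (N0 - k = N0 \<or> l\<^sup>2 / 2 < descent_cost (\<lambda>j k. E j k \<omega>) (Suc (N0 - k)))"
  using clocks_pos_AE
proof (rule AE_mp, intro AE_I2 impI allI)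
  fix \<omega> k assume "\<forall>j\<le>n. \<forall>k. 0 < E j k \<omega>"
  then interpret noiseless_path n N0 N1 v l "\<lambda>j k. E j k \<omega>"
    using l_neg by unfold_locales auto
  show "reversal_at n v rate N0 l (\<lambda>j k. E j k \<omega>) k \<longleftrightarrow>
     k \<le> N0 \<and> descent_cost (\<lambda>j k. E j k \<omega>) (N0 - k) \<le> l\<^sup>2 / 2 \<and>
     (N0 - k = N0 \<or> l\<^sup>2 / 2 < descent_cost (\<lambda>j k. E j k \<omega>) (Suc (N0 - k)))"
    by (rule reversal_at_iff)
qed

definition descent_rate :: "nat \<Rightarrow> real" where
  "descent_rate i = 1 / \<mu> (N0 - 1 - i)"

definition descent_var :: "nat \<Rightarrow> 'a \<Rightarrow> real" where
  "descent_var i \<omega> = \<mu> (N0 - 1 - i) * E (N0 - 1 - i) i \<omega>"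

lemma borel_measurable_descent_var[measurable]: "descent_var i \<in> borel_measurable M"
proof -
  have "E (N0 - 1 - i) i \<in> borel_measurable M" using clock_measurable N0_bound by simp
  then show ?thesis unfolding descent_var_def by measurable
qed

lemma descent_cost_eq_sum: "descent_cost (\<lambda>j k. E j k \<omega>) m = (\<Sum>i<m. descent_var i \<omega>)"
  by (simp add: descent_cost_def descent_var_def)

lemma descent_rate_pos: "i \<le> N0 - 1 \<Longrightarrow> 0 < descent_rate i"
  using mu_pos[of "N0 - 1 - i"] N0_pos by (simp add: descent_rate_def)

lemma inj_on_descent_rate: "inj_on descent_rate {..N0 - 1}"
proof (rule inj_onI)
  fix i i' assume "i \<in> {..N0 - 1}" "i' \<in> {..N0 - 1}" "descent_rate i = descent_rate i'"
  then show "i = i'" using inj_onD[OF mu_inj, of "N0 - 1 - i" "N0 - 1 - i'"] N0_pos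
    by (auto simp: descent_rate_def)
qed

lemma distributed_descent_var:
  assumes "i \<le> N0 - 1"
  shows "distributed M lborel (descent_var i) (\<lambda>x. ennreal (exponential_density (descent_rate i) x))"
proof -
  have "N0 - 1 - i \<le> n" using N0_bound by simp
  from erlang_distributed_mult_const[OF exponential_clocks[OF this] mu_pos]
  have "distributed M lborel (\<lambda>\<omega>. \<mu> (N0 - 1 - i) * E (N0 - 1 - i) i \<omega>) (erlang_density 0 (1 / \<mu> (N0 - 1 - i)))"
    using N0_pos by simp
  then show ?thesis unfolding descent_var_def descent_rate_def by (simp add: fun_eq_iff)
qed

lemma indep_descent_vars: "indep_vars (\<lambda>_. borel) descent_var {..N0 - 1}"
proof -
  define g where "g i = (N0 - 1 - i, i)" for i :: nat
  have "inj_on g {..N0 - 1}" unfolding g_def by (rule inj_onI) auto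
  moreover have "indep_vars (\<lambda>_. borel) (\<lambda>(j, k). E j k) (g ` {..N0 - 1})"
    by (rule indep_vars_subset[OF indep_clocks]) (use N0_bound in \<open>auto simp: g_def\<close>)
  ultimately have "indep_vars (\<lambda>_. borel) (\<lambda>i. (\<lambda>(j, k). E j k) (g i)) {..N0 - 1}"
    by (rule indep_vars_reindex)
  then have "indep_vars (\<lambda>_. borel) (\<lambda>i \<omega>. \<mu> (N0 - 1 - i) * (\<lambda>(j, k). E j k) (g i) \<omega>) {..N0 - 1}"
    by (rule indep_vars_compose2) auto
  then show ?thesis unfolding descent_var_def g_def by simp
qed

lemma prob_descent_between:
  assumes "m \<le> N0 - 1" "0 \<le> w"
  shows "prob {\<omega>\<in>space M. (\<Sum>i<m. descent_var i \<omega>) \<le> w \<and> w < (\<Sum>i<Suc m. descent_var i \<omega>)}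
         = pure_birth_prob descent_rate m w"
proof (cases m)
  case 0
  have "prob {\<omega>\<in>space M. w < descent_var 0 \<omega>} = exp (- w * descent_rate 0)"
    by (rule exponential_distributedD_gt[OF distributed_descent_var assms(2) descent_rate_pos]) simp_all
  then show ?thesis using 0 assms by (simp add: pure_birth_prob_0 mult.commute)
next
  case (Suc q)
  have "prob {\<omega>\<in>space M. (\<Sum>i\<le>q. descent_var i \<omega>) \<le> w \<and> w < (\<Sum>i\<le>q. descent_var i \<omega>) + descent_var (Suc q) \<omega>}
      = pure_birth_prob descent_rate (Suc q) w"
    by (rule prob_hypoexp_between[OF descent_rate_pos inj_on_descent_rate distributed_descent_var
          indep_descent_vars]) (use assms Suc in auto)
  then show ?thesis using Suc by (simp add: lessThan_Suc_atMost add.commute)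
qed

lemma reversal_prob:
  assumes "1 \<le> k" "k \<le> N0"
  shows "prob (reversal_event k) = pure_birth_prob descent_rate (N0 - k) (l\<^sup>2 / 2)"
proof -
  have "prob (reversal_event k) = prob {\<omega>\<in>space M. (\<Sum>i<N0 - k. descent_var i \<omega>) \<le> l\<^sup>2 / 2 \<and>
                                      l\<^sup>2 / 2 < (\<Sum>i<Suc (N0 - k). descent_var i \<omega>)}"
  proof (rule finite_measure_eq_AE)
    show "AE \<omega> in M. \<omega> \<in> reversal_event k \<longleftrightarrow> \<omega> \<in> {\<omega>\<in>space M. (\<Sum>i<N0 - k. descent_var i \<omega>) \<le> l\<^sup>2 / 2 \<and>
                                      l\<^sup>2 / 2 < (\<Sum>i<Suc (N0 - k). descent_var i \<omega>)}"
      using reversal_at_iff_AE by (rule AE_mp) (use assms in \<open>auto intro!: AE_I2 simp: descent_cost_eq_sum\<close>)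
    show "{\<omega>\<in>space M. (\<Sum>i<N0 - k. descent_var i \<omega>) \<le> l\<^sup>2 / 2 \<and>
             l\<^sup>2 / 2 < (\<Sum>i<Suc (N0 - k). descent_var i \<omega>)} \<in> events"
      by measurable
  qed (rule reversal_event_sets)
  also have "\<dots> = pure_birth_prob descent_rate (N0 - k) (l\<^sup>2 / 2)"
    by (rule prob_descent_between) (use assms in auto)
  finally show ?thesis .
qed

lemma reversal_prob_sum: "(\<Sum>j=0..N0. prob (reversal_event j)) = 1"
proof -
  have "disjoint_family_on reversal_event {0..N0}"
    unfolding disjoint_family_on_def reversal_at_def by auto
  then have "(\<Sum>j=0..N0. prob (reversal_event j)) = prob (\<Union>j\<in>{0..N0}. reversal_event j)"
    by (intro finite_measure_finite_Union[symmetric]) (auto intro: reversal_event_sets)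
  also have "\<dots> = prob (space M)"
  proof (rule finite_measure_eq_AE)
    show "AE \<omega> in M. \<omega> \<in> (\<Union>j\<in>{0..N0}. reversal_event j) \<longleftrightarrow> \<omega> \<in> space M"
      using clocks_pos_AE
    proof (rule AE_mp, intro AE_I2 impI)
      fix \<omega> assume \<omega>: "\<omega> \<in> space M" "\<forall>j\<le>n. \<forall>k. 0 < E j k \<omega>"
      then interpret noiseless_path n N0 N1 v l "\<lambda>j k. E j k \<omega>"
        using l_neg by unfold_locales auto
      obtain m where "m \<le> N0" "cost m \<le> l\<^sup>2 / 2" "m = N0 \<or> l\<^sup>2 / 2 < cost (Suc m)"
        using descent_stops by blast
      then have "\<omega> \<in> reversal_event (N0 - m)" using \<omega>(1) reversal_at_iff_stop by simp
      then show "\<omega> \<in> (\<Union>j\<in>{0..N0}. reversal_event j) \<longleftrightarrow> \<omega> \<in> space M" using \<omega>(1) by auto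
    qed
  qed (auto intro: reversal_event_sets)
  also have "\<dots> = 1" by (rule prob_space)
  finally show ?thesis .
qed

end

theorem mainTheorem4:
  fixes M :: "'a measure" and E :: "nat \<Rightarrow> nat \<Rightarrow> 'a \<Rightarrow> real"
    and n N0 N1 :: nat and v :: "nat \<Rightarrow> real" and l :: real
  assumes "prob_space M"
    and "prob_space.indep_vars M (\<lambda>_. borel) (\<lambda>(j, k). E j k) ({..n} \<times> UNIV)"
    and "\<And>j k. j \<le> n \<Longrightarrow> distributed M lborel (E j k) (exponential_density 1)"
    and "noiseless_memory n N0 N1 v"
    and "1 \<le> N0"
    and "condF2 n N0 N1 v \<or> condF' N0 v"
    and "l < 0"
  defines "p \<equiv> \<lambda>j. measure M {\<omega> \<in> space M.
             reversal_at n v (noiseless_rate n N0 N1 v) N0 l (\<lambda>j k. E j k \<omega>) j}"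
    and "\<mu> \<equiv> mu n N0 N1 v"
  shows "p N0 = exp (- l\<^sup>2 / (2 * \<mu> (N0 - 1))) \<and>
         (\<forall>k. 0 < k \<and> k < N0 \<longrightarrow>
           p k = (\<Prod>j=k..N0-1. 1 / \<mu> j) *
                 (\<Sum>j=k-1..N0-1. exp (- l\<^sup>2 / (2 * \<mu> j)) *
                    (\<Prod>i\<in>{k-1..N0-1} - {j}. 1 / (1 / \<mu> i - 1 / \<mu> j)))) \<and>
         p 0 = 1 - (\<Sum>k=1..N0. p k)"
proof -
  have model: "noiseless_model n N0 N1 v" using assms(4,5) by unfold_locales
  interpret noiseless_reversal n N0 N1 v M E l
    using assms(1-3,7) noiseless_model.mu_inj_on[OF model assms(6)] model
    by (intro noiseless_reversal.intro noiseless_reversal_axioms.intro) auto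
  have p: "p k = pure_birth_prob descent_rate (N0 - k) (l\<^sup>2 / 2)" if "1 \<le> k" "k \<le> N0" for k
    unfolding p_def using reversal_prob[OF that] by simp
  have exponent: "- (l\<^sup>2 / 2) / \<mu> j = - l\<^sup>2 / (2 * \<mu> j)" for j by simp
  show ?thesis
  proof (intro conjI allI impI)
    show "p N0 = exp (- l\<^sup>2 / (2 * \<mu> (N0 - 1)))"
      using p[of N0] assms(5) by (simp add: pure_birth_prob_0 descent_rate_def \<mu>_def)
    fix k assume "0 < k \<and> k < N0"
    then show "p k = (\<Prod>j=k..N0-1. 1 / \<mu> j) *
                 (\<Sum>j=k-1..N0-1. exp (- l\<^sup>2 / (2 * \<mu> j)) *
                    (\<Prod>i\<in>{k-1..N0-1} - {j}. 1 / (1 / \<mu> i - 1 / \<mu> j)))"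
      using p[of k] pure_birth_prob_reversed_rates[of "N0 - k" k N0 \<mu> "l\<^sup>2 / 2"]
      unfolding descent_rate_def \<mu>_def exponent by simp
  next
    show "p 0 = 1 - (\<Sum>k=1..N0. p k)"
      using reversal_prob_sum unfolding p_def by (simp add: sum.atLeast_Suc_atMost)
  qed
qed

end
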